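(* Suppose the hospitals' preferences satisfy CPI with respect to $P^0_{hp}\in\mathbb{L}(D\cup\{\emptyset\})$, where for every couple $\{f,m\}\in C$ the labels are such that $f\,P^0_{hp}\,m$. If $P^0_{hp}$ does not satisfy SCPI, then there exists an RVT extension of $P^0_{hp}$ — a preference profile in which the hospitals' preferences satisfy CPI with respect to $P^0_{hp}$ and every couple's preference satisfies RVT with respect to the individual preferences of its two members — at which no stable matching exists.
   Context: Standing model. Let $H$ be a finite set of hospitals with $|H|\ge 2$; each $h\in H$ has a capacity $\kappa_h\in\mathbb{N}$ with $\kappa_h\ge 2$. Write $\bar H=H\cup\{\emptyset\}$, where being assigned $\emptyset$ means being unmatched. The finite set of doctors is $D=F\cup M\cup S$ (pairwise disjoint), with $F=\{f_1,\dots,f_k\}$, $M=\{m_1,\dots,m_k\}$, $k\ge 1$; the set of couples is $C=\{\{f_1,m_1\},\dots,\{f_k,m_k\}\}$, and doctors in $S$ are called single doctors. Assume $|D|\ge 4$ and $\sum_{h\in H}\kappa_h=|D|$. A matching is a map $\mu$ assigning to each $h\in H$ a set $\mu(h)\subseteq D$ with $|\mu(h)|\le\kappa_h$ and to each doctor $d$ an element $\mu(d)\in\bar H$, such that $\mu(d)=h$ iff $d\in\mu(h)$; for a couple $c=\{f,m\}$ write $\mu(c)=(\mu(f),\mu(m))$. For a set $X$, $\mathbb{L}(X)$ is the set of strict linear orders (preferences) on $X$; for a preference $P$, $R$ denotes its reflexive version ($xRy$ iff $x=y$ or $xPy$), and $r_1(P)$ its top element. Each hospital $h$ has a preference $\tilde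 P_h\in\mathbb{L}(D\cup\{\emptyset\})$ over individual doctors with $d\,\tilde P_h\,\emptyset$ for all $d\in D$, and a preference $P_h$ over the feasible sets $\{D'\subseteq D:|D'|\le\kappa_h\}$ that is responsive with respect to $\tilde P_h$: (i) on singletons and $\emptyset$, $P_h$ agrees with $\tilde P_h$; (ii) for all $D'\subsetneq D$ and all $D_1,D_2\subseteq D\setminus D'$ with $|D'\cup D_1|\le\kappa_h$, $|D'\cup D_2|\le\kappa_h$: $(D'\cup D_1)\,P_h\,(D'\cup D_2)$ iff $D_1\,P_h\,D_2$. Each doctor $d\in D$ has a preference $P_d\in\mathbb{L}(\bar H)$ with $h\,P_d\,\emptyset$ for all $h\in H$. Each couple $c=\{f,m\}$ has a preference $P_c\in\mathbb{L}(\bar H^2)$, where the pair $(h,h')$ means $f$ is assigned $h$ and $m$ is assigned $h'$; every pair in $H^2$ is preferred under $P_c$ to every pair in $\bar H^2\setminus H^2$. A preference profile consists of such preferences for all doctors, all couples and all hospitals. Blocking and stability. At a matching $\mu$, hospital $h$ is interested in a set $D'\subseteq D$ if there is $D''\subseteq\mu(h)$ with $|(\mu(h)\setminus D'')\cup D'|\le\kappa_h$ and $((\mu(h)\setminus D'')\cup D')\,P_h\,\mu(h)$. A pair $(h,s)$ with $h\in H$, $s\in S$ blocks $\mu$ if $h\,P_s\,\mu(s)$ and $h$ is interested in $\{s\}$. For a couple $c=\{f,m\}$ and $h_f,h_m\in H$, $((h_f,h_m),c)$ blocks $\mu$ if $(h_f,h_m)\,P_c\,\mu(c)$ and: (i)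 if $h_f\ne h_m$, $\mu(f)\ne h_f$ and $\mu(m)\ne h_m$, then $h_f$ is interested in $\{f\}$ and $h_m$ is interested in $\{m\}$; (ii) if $h_f\ne h_m$ and, for $\{x,y\}=\{f,m\}$, $\mu(x)=h_x$ and $\mu(y)\neq h_y$, then $h_y$ is interested in $\{y\}$; (iii) if $h_f=h_m=h$, then $h$ is interested in $\{f,m\}$. A matching is stable if it is blocked by no such pair. Responsive couple preference: $P_c$ for $c=\{f,m\}$ is responsive w.r.t. $P_f,P_m$ if for all $h,h_1,h_2\in\bar H$: $(h,h_1)P_c(h,h_2)$ iff $h_1P_mh_2$, and $(h_1,h)P_c(h_2,h)$ iff $h_1P_fh_2$. RVT (responsiveness violated for togetherness): a couple preference $\bar P_c\in\mathbb{L}(\bar H^2)$ of $c=\{f,m\}$ satisfies RVT w.r.t. $P_f,P_m$ if there is a preference $P_c\in\mathbb{L}(\bar H^2)$ responsive w.r.t. $P_f,P_m$ such that (i) for all $h\in H$ and $(h_1,h_2)\in\bar H^2$, $(h,h)P_c(h_1,h_2)$ implies $(h,h)\bar P_c(h_1,h_2)$; (ii) for all $(h,h'),(h_1,h_2)\in\bar H^2$ with $h\ne h'$ and $h_1\ne h_2$, $(h,h')P_c(h_1,h_2)$ iff $(h,h')\bar P_c(h_1,h_2)$. CPI: the hospitals' preferences satisfy CPI (common preference over individual doctors) with respect to $P^0_{hp}\in\mathbb{L}(D\cup\{\emptyset\})$ if every $P_h$ is responsive with respect to $P^0_{hp}$ (i.e. $\tilde P_h=P^0_{hp}$ for all $h$).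 SCPI: $P^0_{hp}$ (with $f\,P^0_{hp}\,m$ for every couple) satisfies SCPI (strong CPI) if for every couple $\{f,m\}\in C$: (i) if $m$ is not the lowest-ranked doctor of $D$ under $P^0_{hp}$, then either $|\{d\in D: f\,P^0_{hp}\,d\,P^0_{hp}\,m\}|=0$ or $|\{d\in D: d\,P^0_{hp}\,m\}|<\kappa_h$ for all $h\in H$; (ii) if $m$ is the lowest-ranked doctor of $D$ under $P^0_{hp}$, then $|\{d\in D: f\,P^0_{hp}\,d\,P^0_{hp}\,m\}|\le 1$. *)

theory Defs
  imports Main
begin

text \<open>Preferences are strict linear orders, given as relations: (x,y) in P means x is
  strictly preferred to y.  The outside option (being unmatched / the empty set of doctors)
  is represented by None.\<close>

definition pref_on :: "'a set \<Rightarrow> 'a rel \<Rightarrow> bool" where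
  "pref_on X P \<longleftrightarrow> P \<subseteq> X \<times> X \<and> strict_linear_order_on X P"

definition doctors :: "'d set \<Rightarrow> ('d \<times> 'd) set \<Rightarrow> 'd set" where
  "doctors S C = S \<union> fst ` C \<union> snd ` C"

definition standing_model :: "'h set \<Rightarrow> ('h \<Rightarrow> nat) \<Rightarrow> 'd set \<Rightarrow> ('d \<times> 'd) set \<Rightarrow> bool" where
  "standing_model H \<kappa> S C \<longleftrightarrow>
     finite H \<and> card H \<ge> 2 \<and> (\<forall>h\<in>H. \<kappa> h \<ge> 2) \<and>
     finite S \<and> finite C \<and> C \<noteq> {} \<and>
     inj_on fst C \<and> inj_on snd C \<and>
     fst ` C \<inter> snd ` C = {} \<and> fst ` C \<inter> S = {} \<and> snd ` C \<inter> S = {} \<and>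
     card (doctors S C) \<ge> 4 \<and> (\<Sum>h\<in>H. \<kappa> h) = card (doctors S C)"

definition Hbar :: "'h set \<Rightarrow> 'h option set" where
  "Hbar H = insert None (Some ` H)"

definition feasible_sets :: "'d set \<Rightarrow> nat \<Rightarrow> 'd set set" where
  "feasible_sets D k = {D'. D' \<subseteq> D \<and> card D' \<le> k}"

definition indiv_hosp_pref :: "'d set \<Rightarrow> 'd option rel \<Rightarrow> bool" where
  "indiv_hosp_pref D P \<longleftrightarrow> pref_on (insert None (Some ` D)) P \<and> (\<forall>d\<in>D. (Some d, None) \<in> P)"

definition opt_set :: "'d option \<Rightarrow> 'd set" where
  "opt_set x = (case x of None \<Rightarrow> {} | Some d \<Rightarrow> {d})"

definition responsive_hosp :: "'d set \<Rightarrow> nat \<Rightarrow> 'd option rel \<Rightarrow> 'd set rel \<Rightarrow> bool" where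
  "responsive_hosp D k Pt P \<longleftrightarrow>
     (\<forall>x\<in>insert None (Some ` D). \<forall>y\<in>insert None (Some ` D).
        (opt_set x, opt_set y) \<in> P \<longleftrightarrow> (x, y) \<in> Pt) \<and>
     (\<forall>D' D1 D2. D' \<subset> D \<longrightarrow> D1 \<subseteq> D - D' \<longrightarrow> D2 \<subseteq> D - D' \<longrightarrow>
        card (D' \<union> D1) \<le> k \<longrightarrow> card (D' \<union> D2) \<le> k \<longrightarrow>
        ((D' \<union> D1, D' \<union> D2) \<in> P \<longleftrightarrow> (D1, D2) \<in> P))"

definition hosp_pref_CPI :: "'d set \<Rightarrow> nat \<Rightarrow> 'd option rel \<Rightarrow> 'd set rel \<Rightarrow> bool" where
  "hosp_pref_CPI D k P0 P \<longleftrightarrow>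
     pref_on (feasible_sets D k) P \<and> indiv_hosp_pref D P0 \<and> responsive_hosp D k P0 P"

definition doctor_pref :: "'h set \<Rightarrow> 'h option rel \<Rightarrow> bool" where
  "doctor_pref H P \<longleftrightarrow> pref_on (Hbar H) P \<and> (\<forall>h\<in>H. (Some h, None) \<in> P)"

definition couple_pref :: "'h set \<Rightarrow> ('h option \<times> 'h option) rel \<Rightarrow> bool" where
  "couple_pref H P \<longleftrightarrow> pref_on (Hbar H \<times> Hbar H) P \<and>
     (\<forall>a\<in>Some ` H \<times> Some ` H. \<forall>b\<in>(Hbar H \<times> Hbar H) - (Some ` H \<times> Some ` H). (a, b) \<in> P)"

definition responsive_couple ::
  "'h set \<Rightarrow> 'h option rel \<Rightarrow> 'h option rel \<Rightarrow> ('h option \<times> 'h option) rel \<Rightarrow> bool" where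
  "responsive_couple H Pf Pm Pc \<longleftrightarrow>
     (\<forall>h\<in>Hbar H. \<forall>h1\<in>Hbar H. \<forall>h2\<in>Hbar H.
        (((h, h1), (h, h2)) \<in> Pc \<longleftrightarrow> (h1, h2) \<in> Pm) \<and>
        (((h1, h), (h2, h)) \<in> Pc \<longleftrightarrow> (h1, h2) \<in> Pf))"

definition RVT ::
  "'h set \<Rightarrow> 'h option rel \<Rightarrow> 'h option rel \<Rightarrow> ('h option \<times> 'h option) rel \<Rightarrow> bool" where
  "RVT H Pf Pm Pbar \<longleftrightarrow>
     (\<exists>Pc. pref_on (Hbar H \<times> Hbar H) Pc \<and> responsive_couple H Pf Pm Pc \<and>
        (\<forall>h\<in>H. \<forall>x\<in>Hbar H \<times> Hbar H.
            ((Some h, Some h), x) \<in> Pc \<longrightarrow> ((Some h, Some h), x) \<in> Pbar) \<and>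
        (\<forall>h\<in>Hbar H. \<forall>h'\<in>Hbar H. \<forall>h1\<in>Hbar H. \<forall>h2\<in>Hbar H. h \<noteq> h' \<longrightarrow> h1 \<noteq> h2 \<longrightarrow>
            (((h, h'), (h1, h2)) \<in> Pc \<longleftrightarrow> ((h, h'), (h1, h2)) \<in> Pbar)))"

text \<open>Matchings: mu d is the assignment of doctor d (None = unmatched);
  the set assigned to hospital h is assigned D mu h.\<close>
definition assigned :: "'d set \<Rightarrow> ('d \<Rightarrow> 'h option) \<Rightarrow> 'h \<Rightarrow> 'd set" where
  "assigned D \<mu> h = {d\<in>D. \<mu> d = Some h}"

definition is_matching :: "'h set \<Rightarrow> ('h \<Rightarrow> nat) \<Rightarrow> 'd set \<Rightarrow> ('d \<Rightarrow> 'h option) \<Rightarrow> bool" where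
  "is_matching H \<kappa> D \<mu> \<longleftrightarrow>
     (\<forall>d\<in>D. \<mu> d \<in> Hbar H) \<and> (\<forall>h\<in>H. card (assigned D \<mu> h) \<le> \<kappa> h)"

definition interested ::
  "('h \<Rightarrow> nat) \<Rightarrow> 'd set \<Rightarrow> ('h \<Rightarrow> 'd set rel) \<Rightarrow> ('d \<Rightarrow> 'h option) \<Rightarrow> 'h \<Rightarrow> 'd set \<Rightarrow> bool" where
  "interested \<kappa> D Ph \<mu> h D' \<longleftrightarrow>
     (\<exists>D''. D'' \<subseteq> assigned D \<mu> h \<and>
        card ((assigned D \<mu> h - D'') \<union> D') \<le> \<kappa> h \<and>
        ((assigned D \<mu> h - D'') \<union> D', assigned D \<mu> h) \<in> Ph h)"

definition blocks_single ::
  "('h \<Rightarrow> nat) \<Rightarrow> 'd set \<Rightarrow> ('d \<Rightarrow> 'h option rel) \<Rightarrow> ('h \<Rightarrow> 'd set rel) \<Rightarrow> ('d \<Rightarrow> 'h option)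
     \<Rightarrow> 'h \<Rightarrow> 'd \<Rightarrow> bool" where
  "blocks_single \<kappa> D Pd Ph \<mu> h s \<longleftrightarrow>
     (Some h, \<mu> s) \<in> Pd s \<and> interested \<kappa> D Ph \<mu> h {s}"

definition blocks_couple ::
  "('h \<Rightarrow> nat) \<Rightarrow> 'd set \<Rightarrow> ('d \<times> 'd \<Rightarrow> ('h option \<times> 'h option) rel) \<Rightarrow> ('h \<Rightarrow> 'd set rel)
     \<Rightarrow> ('d \<Rightarrow> 'h option) \<Rightarrow> 'h \<Rightarrow> 'h \<Rightarrow> 'd \<times> 'd \<Rightarrow> bool" where
  "blocks_couple \<kappa> D Pc Ph \<mu> hf hm c \<longleftrightarrow>
     (case c of (f, m) \<Rightarrow>
       ((Some hf, Some hm), (\<mu> f, \<mu> m)) \<in> Pc c \<and>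
       (hf \<noteq> hm \<longrightarrow> \<mu> f \<noteq> Some hf \<longrightarrow> \<mu> m \<noteq> Some hm \<longrightarrow>
          interested \<kappa> D Ph \<mu> hf {f} \<and> interested \<kappa> D Ph \<mu> hm {m}) \<and>
       (hf \<noteq> hm \<longrightarrow> \<mu> f = Some hf \<longrightarrow> \<mu> m \<noteq> Some hm \<longrightarrow> interested \<kappa> D Ph \<mu> hm {m}) \<and>
       (hf \<noteq> hm \<longrightarrow> \<mu> m = Some hm \<longrightarrow> \<mu> f \<noteq> Some hf \<longrightarrow> interested \<kappa> D Ph \<mu> hf {f}) \<and>
       (hf = hm \<longrightarrow> interested \<kappa> D Ph \<mu> hf {f, m}))"

definition stable ::
  "'h set \<Rightarrow> ('h \<Rightarrow> nat) \<Rightarrow> 'd set \<Rightarrow> ('d \<times> 'd) set \<Rightarrow> ('d \<Rightarrow> 'h option rel)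
     \<Rightarrow> ('d \<times> 'd \<Rightarrow> ('h option \<times> 'h option) rel) \<Rightarrow> ('h \<Rightarrow> 'd set rel) \<Rightarrow> ('d \<Rightarrow> 'h option) \<Rightarrow> bool" where
  "stable H \<kappa> S C Pd Pc Ph \<mu> \<longleftrightarrow>
     is_matching H \<kappa> (doctors S C) \<mu> \<and>
     (\<forall>h\<in>H. \<forall>s\<in>S. \<not> blocks_single \<kappa> (doctors S C) Pd Ph \<mu> h s) \<and>
     (\<forall>c\<in>C. \<forall>hf\<in>H. \<forall>hm\<in>H. \<not> blocks_couple \<kappa> (doctors S C) Pc Ph \<mu> hf hm c)"

definition SCPI :: "'h set \<Rightarrow> ('h \<Rightarrow> nat) \<Rightarrow> 'd set \<Rightarrow> ('d \<times> 'd) set \<Rightarrow> 'd option rel \<Rightarrow> bool" where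
  "SCPI H \<kappa> S C P0 \<longleftrightarrow>
     (\<forall>(f, m)\<in>C.
        let D = doctors S C;
            lowest = (\<forall>d\<in>D. d \<noteq> m \<longrightarrow> (Some d, Some m) \<in> P0);
            btw = card {d\<in>D. (Some f, Some d) \<in> P0 \<and> (Some d, Some m) \<in> P0};
            above = card {d\<in>D. (Some d, Some m) \<in> P0}
        in (\<not> lowest \<longrightarrow> (btw = 0 \<or> (\<forall>h\<in>H. above < \<kappa> h))) \<and>
           (lowest \<longrightarrow> btw \<le> 1))"

end

(*
  A violation of SCPI supplies a couple (f, m), two further doctors g1 and g2 ranked by the
  hospitals as m, g2 < g1 < f, the lowest doctor z and two hospitals h1 and h2. Every other doctor
  is destined to a hospital that it ranks first, and these destinations fill all seats except two
  at h1 and two at h2. The doctors f, g1, m, g2 rank h1 first and h2 second, and (f, m) puts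
  being together at h1, then together at h2, above everything else: the one departure from
  responsiveness that RVT allows. Hospitals compare sets by the sum of 2 ^ rank, which is
  responsive to the common ranking.

  In a stable matching every seat is taken. Look at the highest-ranked doctor that is not at its
  intended place: counting the seats it aims at always yields a lower-ranked doctor there that it
  can displace, alone or together with its partner. Hence everybody is placed, so f, g1, m, g2
  share the four free seats of h1 and h2, and each such split is blocked, by (f, m) moving
  together, by g1 envying h1, or by g1 together with its partner.
*)

theory Submission
  imports Defs "HOL-Library.Product_Lexorder"
begin

section \<open>Preferences from keys, ranks and weights\<close>

lemma pref_on_key_less:
  fixes k :: "'a \<Rightarrow> 'b::linorder"
  assumes "inj_on k X"
  shows "pref_on X {(a, b). a \<in> X \<and> b \<in> X \<and> k a < k b}"
  using assms
    unfolding pref_on_def strict_linear_order_on_def trans_def irrefl_def total_on_def inj_on_def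
  by (auto, metis linorder_neqE)

lemma pref_on_key_greater:
  fixes k :: "'a \<Rightarrow> 'b::linorder"
  assumes "inj_on k X"
  shows "pref_on X {(a, b). a \<in> X \<and> b \<in> X \<and> k b < k a}"
  using assms
    unfolding pref_on_def strict_linear_order_on_def trans_def irrefl_def total_on_def inj_on_def
  by (auto, metis linorder_neqE)

definition rank :: "'d set \<Rightarrow> 'd option rel \<Rightarrow> 'd \<Rightarrow> nat" where
  "rank D P0 d = card {e \<in> D. (Some d, Some e) \<in> P0}"

locale common_ranking =
  fixes D :: "'d set" and P0 :: "'d option rel"
  assumes finite_D: "finite D"
    and pref_P0: "pref_on (insert None (Some ` D)) P0"
begin

lemma rank_less_of_pref:
  assumes "d \<in> D" "e \<in> D" "(Some d, Some e) \<in> P0"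
  shows "rank D P0 e < rank D P0 d"
  unfolding rank_def
proof (rule psubset_card_mono)
  have "trans P0" "irrefl P0" using pref_P0 unfolding pref_on_def strict_linear_order_on_def by auto
  then show "{x \<in> D. (Some e, Some x) \<in> P0} \<subset> {x \<in> D. (Some d, Some x) \<in> P0}"
    using assms unfolding trans_def irrefl_def by blast
qed (use finite_D in simp)

lemma pref_total:
  assumes "d \<in> D" "e \<in> D" "d \<noteq> e"
  shows "(Some d, Some e) \<in> P0 \<or> (Some e, Some d) \<in> P0"
  using pref_P0 assms unfolding pref_on_def strict_linear_order_on_def total_on_def by auto

lemma pref_iff_rank_less:
  assumes "d \<in> D" "e \<in> D"
  shows "(Some d, Some e) \<in> P0 \<longleftrightarrow> rank D P0 e < rank D P0 d"
  using rank_less_of_pref[OF assms] rank_less_of_pref[OF assms(2,1)] pref_total[OF assms]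
  by (cases "d = e") auto

lemma inj_on_rank: "inj_on (rank D P0) D"
  by (rule inj_onI) (metis pref_total rank_less_of_pref less_irrefl)

lemma rank_image: "rank D P0 ` D = {..<card D}"
proof -
  have "rank D P0 d < card D" if "d \<in> D" for d
  proof -
    have "irrefl P0" using pref_P0 unfolding pref_on_def strict_linear_order_on_def by auto
    then have "{e \<in> D. (Some d, Some e) \<in> P0} \<subset> D" using that unfolding irrefl_def by auto
    then show ?thesis unfolding rank_def using finite_D psubset_card_mono by blast
  qed
  moreover have "card (rank D P0 ` D) = card D" using card_image inj_on_rank by blast
  ultimately show ?thesis by (intro card_subset_eq) auto
qed

end

text \<open>For injective w, comparing weights compares two sets at the best element in which they
  differ; this makes the induced preference on sets responsive.\<close>

definition weight :: "('d \<Rightarrow> nat) \<Rightarrow> 'd set \<Rightarrow> nat" where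
  "weight w A = (\<Sum>a\<in>A. 2 ^ w a)"

lemma weight_less:
  assumes "finite A" "finite B" "inj_on w (B - A)"
    and x: "x \<in> A - B" and below: "\<forall>y\<in>B - A. w y < w x"
  shows "weight w B < weight w A"
proof -
  have "weight w (B - A) = (\<Sum>i\<in>w ` (B - A). 2 ^ i)"
    unfolding weight_def using assms(3) by (simp add: sum.reindex)
  also have "\<dots> \<le> (\<Sum>i=0..<w x. 2 ^ i)"
    using below assms(2) by (intro sum_mono2) auto
  also have "\<dots> < 2 ^ w x" by (simp add: sum_power2)
  also have "\<dots> \<le> weight w (A - B)"
    unfolding weight_def using x assms(1) by (intro member_le_sum) auto
  finally have "weight w (B - A) < weight w (A - B)" .
  moreover have "weight w A = weight w (A \<inter> B) + weight w (A - B)"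
    unfolding weight_def by (rule sum.Int_Diff[OF assms(1)])
  moreover have "weight w B = weight w (B \<inter> A) + weight w (B - A)"
    unfolding weight_def by (rule sum.Int_Diff[OF assms(2)])
  ultimately show ?thesis by (simp add: Int_commute)
qed

lemma inj_on_weight:
  assumes "finite D" "inj_on w D"
  shows "inj_on (weight w) (Pow D)"
proof (rule inj_onI, rule ccontr)
  fix A B assume AB: "A \<in> Pow D" "B \<in> Pow D" and eq: "weight w A = weight w B" and "A \<noteq> B"
  let ?X = "(A - B) \<union> (B - A)"
  have fin: "finite A" "finite B" "finite ?X" using assms(1) AB finite_subset by blast+
  have inj: "inj_on w ?X" by (rule inj_on_subset[OF assms(2)]) (use AB in auto)
  have "?X \<noteq> {}" using \<open>A \<noteq> B\<close> by blast
  then have "Max (w ` ?X) \<in> w ` ?X" using fin(3) by (intro Max_in) auto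
  then obtain x where x: "x \<in> ?X" "w x = Max (w ` ?X)" by (metis imageE)
  have below: "w y < w x" if "y \<in> ?X" "y \<noteq> x" for y
  proof -
    have "w y \<le> w x" using that(1) x(2) fin(3) by simp
    moreover have "w y \<noteq> w x" using inj that x(1) unfolding inj_on_def by blast
    ultimately show ?thesis by simp
  qed
  have injAB: "inj_on w (B - A)" "inj_on w (A - B)" using inj by (auto intro: inj_on_subset)
  show False
  proof (cases "x \<in> A")
    case True
    moreover have "\<forall>y\<in>B - A. w y < w x" using below True by blast
    ultimately have "weight w B < weight w A"
      using x(1) by (intro weight_less[OF fin(1,2) injAB(1)]) auto
    then show False using eq by simp
  next
    case False
    moreover have "\<forall>y\<in>A - B. w y < w x" using below False by blast
    ultimately have "weight w A < weight w B"
      using x(1) by (intro weight_less[OF fin(2,1) injAB(2)]) auto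
    then show False using eq by simp
  qed
qed

definition weight_pref :: "'d set \<Rightarrow> ('d \<Rightarrow> nat) \<Rightarrow> nat \<Rightarrow> 'd set rel" where
  "weight_pref D w k =
     {(A, B). A \<in> feasible_sets D k \<and> B \<in> feasible_sets D k \<and> weight w B < weight w A}"

lemma weight_opt_set: "weight w (opt_set x) = (case x of None \<Rightarrow> 0 | Some d \<Rightarrow> 2 ^ w d)"
  unfolding weight_def opt_set_def by (cases x) auto

lemma hosp_pref_CPI_weight_pref:
  assumes finD: "finite D" and P0: "indiv_hosp_pref D P0" and k: "1 \<le> k"
  shows "hosp_pref_CPI D k P0 (weight_pref D (rank D P0) k)"
  unfolding hosp_pref_CPI_def
proof (intro conjI)
  have pref: "pref_on (insert None (Some ` D)) P0" using P0 unfolding indiv_hosp_pref_def by simp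
  interpret common_ranking D P0 using finD pref by unfold_locales
  let ?w = "rank D P0"
  have "inj_on (weight ?w) (feasible_sets D k)"
    using inj_on_weight[OF finD inj_on_rank] unfolding feasible_sets_def
    by (rule inj_on_subset) auto
  then show "pref_on (feasible_sets D k) (weight_pref D ?w k)"
    unfolding weight_pref_def by (rule pref_on_key_greater)
  show "indiv_hosp_pref D P0" by (rule P0)
  have asym: "(x, y) \<in> P0 \<Longrightarrow> (y, x) \<notin> P0" and irr: "(x, x) \<notin> P0" for x y
    using pref unfolding pref_on_def strict_linear_order_on_def trans_def irrefl_def by blast+
  show "responsive_hosp D k P0 (weight_pref D ?w k)"
    unfolding responsive_hosp_def
  proof (intro conjI ballI allI impI)
    fix x y assume x: "x \<in> insert None (Some ` D)" and y: "y \<in> insert None (Some ` D)"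
    have "opt_set x \<in> feasible_sets D k" "opt_set y \<in> feasible_sets D k"
      using x y k unfolding feasible_sets_def opt_set_def by auto
    then show "(opt_set x, opt_set y) \<in> weight_pref D ?w k \<longleftrightarrow> (x, y) \<in> P0"
      using x y P0 asym irr pref_iff_rank_less unfolding weight_pref_def indiv_hosp_pref_def
      by (cases x; cases y) (auto simp: weight_opt_set)
  next
    fix D' D1 D2 assume D': "D' \<subset> D" and D1: "D1 \<subseteq> D - D'" and D2: "D2 \<subseteq> D - D'"
      and c1: "card (D' \<union> D1) \<le> k" and c2: "card (D' \<union> D2) \<le> k"
    have fin: "finite D'" "finite D1" "finite D2" using D' D1 D2 finD finite_subset by blast+
    have "weight ?w (D' \<union> D1) = weight ?w D' + weight ?w D1"
      "weight ?w (D' \<union> D2) = weight ?w D' + weight ?w D2"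
      unfolding weight_def using fin D1 D2 by (auto intro: sum.union_disjoint)
    moreover have "card D1 \<le> k" "card D2 \<le> k"
      using c1 c2 card_mono[of "D' \<union> D1" D1] card_mono[of "D' \<union> D2" D2] fin by auto
    ultimately show "(D' \<union> D1, D' \<union> D2) \<in> weight_pref D ?w k \<longleftrightarrow> (D1, D2) \<in> weight_pref D ?w k"
      unfolding weight_pref_def feasible_sets_def using D' D1 D2 c1 c2 by auto
  qed
qed

lemma interested_weight_prefI:
  assumes Ph: "Ph h = weight_pref D w (\<kappa> h)" and finD: "finite D" and inj: "inj_on w D"
    and cap: "card (assigned D \<mu> h) \<le> \<kappa> h" and R: "R \<subseteq> assigned D \<mu> h" and X: "X \<subseteq> D"
    and cap': "card ((assigned D \<mu> h - R) \<union> X) \<le> \<kappa> h"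
    and x: "x \<in> X - assigned D \<mu> h" and below: "\<forall>y\<in>R - X. w y < w x"
  shows "interested \<kappa> D Ph \<mu> h X"
proof -
  let ?A = "assigned D \<mu> h"
  let ?N = "(?A - R) \<union> X"
  have AD: "?A \<subseteq> D" and ND: "?N \<subseteq> D" using X unfolding assigned_def by auto
  have "weight w ?A < weight w ?N"
  proof (rule weight_less)
    show "finite ?N" "finite ?A" using AD ND finD finite_subset by blast+
    show "inj_on w (?A - ?N)" by (rule inj_on_subset[OF inj]) (use AD in auto)
  qed (use x below in auto)
  then have "(?N, ?A) \<in> Ph h"
    unfolding Ph weight_pref_def feasible_sets_def using AD ND cap cap' by auto
  then show ?thesis unfolding interested_def using R cap' by blast
qed

lemma blocks_coupleI:
  assumes "((Some hf, Some hm), (\<mu> a, \<mu> b)) \<in> Pc (a, b)"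
    and "hf \<noteq> hm \<Longrightarrow> \<mu> a \<noteq> Some hf \<Longrightarrow> interested \<kappa> D Ph \<mu> hf {a}"
    and "hf \<noteq> hm \<Longrightarrow> \<mu> b \<noteq> Some hm \<Longrightarrow> interested \<kappa> D Ph \<mu> hm {b}"
    and "hf = hm \<Longrightarrow> interested \<kappa> D Ph \<mu> hf {a, b}"
  shows "blocks_couple \<kappa> D Pc Ph \<mu> hf hm (a, b)"
  using assms unfolding blocks_couple_def by auto

lemma card_unmatched_eq_free_seats:
  assumes "finite H" "finite D" "is_matching H \<kappa> D \<mu>" "(\<Sum>h\<in>H. \<kappa> h) = card D"
  shows "card {d \<in> D. \<mu> d = None} = (\<Sum>h\<in>H. \<kappa> h - card (assigned D \<mu> h))"
proof -
  have split: "D = {d \<in> D. \<mu> d = None} \<union> (\<Union>h\<in>H. assigned D \<mu> h)"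
    using assms(3) unfolding is_matching_def Hbar_def assigned_def by auto
  have fin: "finite (\<Union>h\<in>H. assigned D \<mu> h)"
    using assms(2) by (rule finite_subset[rotated]) (auto simp: assigned_def)
  have "card (\<Union>h\<in>H. assigned D \<mu> h) = (\<Sum>h\<in>H. card (assigned D \<mu> h))"
    using assms(1,2) by (intro card_UN_disjoint) (auto simp: assigned_def)
  moreover have "card D = card {d \<in> D. \<mu> d = None} + card (\<Union>h\<in>H. assigned D \<mu> h)"
    using assms(2) fin by (subst split, intro card_Un_disjoint) (auto simp: assigned_def)
  moreover have "(\<Sum>h\<in>H. \<kappa> h - card (assigned D \<mu> h)) = (\<Sum>h\<in>H. \<kappa> h) - (\<Sum>h\<in>H. card (assigned D \<mu> h))"
    using assms(3) unfolding is_matching_def by (intro sum_subtractf_nat) auto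
  ultimately show ?thesis using assms(4) by simp
qed

lemma sum_ge_2_cases:
  fixes g :: "'a \<Rightarrow> nat"
  assumes "finite X" "2 \<le> sum g X"
  obtains x where "x \<in> X" "2 \<le> g x" | x y where "x \<in> X" "y \<in> X" "x \<noteq> y" "1 \<le> g x" "1 \<le> g y"
proof (cases "\<exists>x\<in>X. 2 \<le> g x")
  case True
  then show thesis using that(1) by blast
next
  case False
  let ?P = "{x \<in> X. 1 \<le> g x}"
  have "sum g X = sum g ?P"
    using assms(1) by (intro sum.mono_neutral_right) auto
  also have "\<dots> \<le> sum (\<lambda>_. 1) ?P"
    using False by (intro sum_mono) auto
  finally have "\<not> card ?P \<le> Suc 0" using assms(2) by simp
  then obtain x y where "x \<in> ?P" "y \<in> ?P" "x \<noteq> y"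
    using assms(1) card_le_Suc0_iff_eq[of ?P] by auto
  then show thesis using that(2) by blast
qed

lemma card_below_ge:
  fixes w :: "'a \<Rightarrow> nat"
  assumes "finite Y" "inj_on w (insert d Y)" "d \<notin> Y"
    and "{e \<in> Y. w d < w e} \<subseteq> Z" "finite Z" "card Z + j \<le> card Y"
  shows "j \<le> card {e \<in> Y. w e < w d}"
proof -
  have "w e < w d \<or> w d < w e" if "e \<in> Y" for e
  proof -
    have "w e \<noteq> w d" using assms(2,3) that unfolding inj_on_def by blast
    then show ?thesis by linarith
  qed
  then have "Y = {e \<in> Y. w d < w e} \<union> {e \<in> Y. w e < w d}" by auto
  then have "card Y \<le> card {e \<in> Y. w d < w e} + card {e \<in> Y. w e < w d}"
    by (metis card_Un_le)
  moreover have "card {e \<in> Y. w d < w e} \<le> card Z" using assms(4,5) by (rule card_mono[rotated])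
  ultimately show ?thesis using assms(6) by linarith
qed

lemma ex_top_subset:
  fixes w :: "'a \<Rightarrow> nat"
  assumes fin: "finite X" and inj: "inj_on w X" and k: "k \<le> card X"
  shows "\<exists>V\<subseteq>X. card V = k \<and> (\<forall>v\<in>V. \<forall>u\<in>X - V. w u < w v)"
  using k
proof (induction k)
  case 0
  show ?case by (intro exI[of _ "{}"]) auto
next
  case (Suc k)
  then obtain V where V: "V \<subseteq> X" "card V = k" "\<forall>v\<in>V. \<forall>u\<in>X - V. w u < w v" by auto
  have "X - V \<noteq> {}" using Suc.prems V(1,2) by auto
  then have "Max (w ` (X - V)) \<in> w ` (X - V)" using fin by (intro Max_in) auto
  then obtain u0 where u0: "u0 \<in> X - V" "w u0 = Max (w ` (X - V))" by (metis imageE)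
  have "w u < w u0" if "u \<in> X - insert u0 V" for u
  proof -
    have "w u \<le> w u0" using u0(2) that fin by simp
    moreover have "w u \<noteq> w u0" using inj u0(1) that unfolding inj_on_def by blast
    ultimately show ?thesis by simp
  qed
  moreover have "card (insert u0 V) = Suc k" using V(1,2) u0(1) fin finite_subset by fastforce
  ultimately show ?case using V u0(1) by (intro exI[of _ "insert u0 V"]) auto
qed

lemma ex_map_with_fibre_cards:
  fixes s :: "'i \<Rightarrow> nat"
  assumes "finite I" "finite Y" "(\<Sum>i\<in>I. s i) = card Y"
  shows "\<exists>t. (\<forall>y\<in>Y. t y \<in> I) \<and> (\<forall>i\<in>I. card {y \<in> Y. t y = i} = s i)"
  using assms
proof (induction I arbitrary: Y rule: finite_induct)
  case empty
  then show ?case by auto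
next
  case (insert i I)
  then have "s i \<le> card Y" by simp
  then obtain Z where Z: "Z \<subseteq> Y" "card Z = s i" by (metis obtain_subset_with_card_n)
  have "(\<Sum>j\<in>I. s j) = card (Y - Z)"
    using insert Z card_Diff_subset[of Z Y] finite_subset by fastforce
  then obtain t where t: "\<forall>y\<in>Y - Z. t y \<in> I" "\<forall>j\<in>I. card {y \<in> Y - Z. t y = j} = s j"
    using insert.IH[of "Y - Z"] insert.prems by auto
  let ?t = "\<lambda>y. if y \<in> Z then i else t y"
  have "{y \<in> Y. ?t y = i} = Z" using Z(1) t(1) insert.hyps(2) by auto
  moreover have "{y \<in> Y. ?t y = j} = {y \<in> Y - Z. t y = j}" if "j \<noteq> i" for j using that by auto
  ultimately have "card {y \<in> Y. ?t y = j} = s j" if "j \<in> insert i I" for j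
    using that t(2) Z(2) by (cases "j = i") auto
  then show ?case using t(1) by (intro exI[of _ ?t]) auto
qed

lemma ex_other_of_card_ge_2: "2 \<le> card X \<Longrightarrow> \<exists>x\<in>X. x \<noteq> a"
  using card_mono[of "{a}" X] by (cases "X \<subseteq> {a}") (auto dest: finite_subset[of X "{a}"])

section \<open>The market and the gadget\<close>

locale CPI_market =
  fixes H :: "'h set" and \<kappa> :: "'h \<Rightarrow> nat" and S :: "'d set" and C :: "('d \<times> 'd) set"
    and P0 :: "'d option rel"
  assumes model: "standing_model H \<kappa> S C"
    and indiv_P0: "indiv_hosp_pref (doctors S C) P0"
    and couple_labels: "\<forall>(a, b)\<in>C. (Some a, Some b) \<in> P0"
begin

abbreviation "D \<equiv> doctors S C"
abbreviation "w \<equiv> rank D P0"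

lemma finite_H: "finite H" and finite_D: "finite D" and card_H: "2 \<le> card H"
  and card_D: "4 \<le> card D" and sum_kappa: "(\<Sum>h\<in>H. \<kappa> h) = card D"
  using model unfolding standing_model_def doctors_def by auto

lemma kappa_ge_2: "h \<in> H \<Longrightarrow> 2 \<le> \<kappa> h"
  using model unfolding standing_model_def by auto

lemma kappa_pair_le: "h \<in> H \<Longrightarrow> h' \<in> H \<Longrightarrow> h \<noteq> h' \<Longrightarrow> \<kappa> h + \<kappa> h' \<le> card D"
  using sum_mono2[OF finite_H, of "{h, h'}" \<kappa>] sum_kappa by simp

sublocale common_ranking D P0
  by unfold_locales (use finite_D indiv_P0 in \<open>auto simp: indiv_hosp_pref_def\<close>)

lemma rank_less_card: "d \<in> D \<Longrightarrow> w d < card D"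
  using rank_image by blast

lemma ex_rank: "i < card D \<Longrightarrow> \<exists>d\<in>D. w d = i"
  using rank_image by (metis imageE lessThan_iff)

lemma rank_eq_iff: "d \<in> D \<Longrightarrow> e \<in> D \<Longrightarrow> w d = w e \<longleftrightarrow> d = e"
  using inj_on_rank unfolding inj_on_def by blast

lemma couple_in_D: "(a, b) \<in> C \<Longrightarrow> a \<in> D \<and> b \<in> D"
  unfolding doctors_def by force

lemma couple_rank_less: "(a, b) \<in> C \<Longrightarrow> w b < w a"
  using couple_labels couple_in_D pref_iff_rank_less by blast

lemma couple_fst_unique: "(a, b) \<in> C \<Longrightarrow> (a, b') \<in> C \<Longrightarrow> b = b'"
  using model unfolding standing_model_def inj_on_def by force

lemma couple_snd_unique: "(a, b) \<in> C \<Longrightarrow> (a', b) \<in> C \<Longrightarrow> a = a'"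
  using model unfolding standing_model_def inj_on_def by force

lemma couple_fst_not_snd: "(a, b) \<in> C \<Longrightarrow> (b', a) \<notin> C"
  using model unfolding standing_model_def by force

lemma doctor_cases: "d \<in> D \<Longrightarrow> d \<in> S \<or> (\<exists>p. (d, p) \<in> C) \<or> (\<exists>p. (p, d) \<in> C)"
  unfolding doctors_def by force

definition partners :: "'d \<Rightarrow> 'd set" where
  "partners d = {p. (d, p) \<in> C \<or> (p, d) \<in> C}"

lemma partners_unique: "p \<in> partners d \<Longrightarrow> q \<in> partners d \<Longrightarrow> p = q"
  unfolding partners_def using couple_fst_unique couple_snd_unique couple_fst_not_snd by blast

end

locale gadget = CPI_market H \<kappa> S C P0
  for H :: "'h set" and \<kappa> :: "'h \<Rightarrow> nat" and S :: "'d set" and C :: "('d \<times> 'd) set"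
    and P0 :: "'d option rel" +
  fixes f m g1 g2 z :: 'd and h1 h2 :: 'h
  assumes couple_fm: "(f, m) \<in> C"
    and g1_in_D: "g1 \<in> D" and g2_in_D: "g2 \<in> D" and g2_ne_m: "g2 \<noteq> m"
    and h1_in_H: "h1 \<in> H" and h2_in_H: "h2 \<in> H" and h1_ne_h2: "h1 \<noteq> h2"
    and rank_m_g1: "w m < w g1" and rank_g1_f: "w g1 < w f" and rank_g2_g1: "w g2 < w g1"
    and z_in_D: "z \<in> D" and rank_z: "w z = 0"
    and z_partners: "\<forall>a. (a, z) \<in> C \<longrightarrow> a \<in> {f, g1, m, g2}"
    and g2_choice: "w m < w g2 \<or> g2 = z \<or> (g2, z) \<in> C"
    and enough_above_g1: "\<kappa> h1 - 2 \<le> card {v \<in> D - {f, g1, m, g2}. w g1 < w v}"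
begin

abbreviation "G \<equiv> {f, g1, m, g2}"
abbreviation "world \<equiv> D - G"

lemma f_in_D: "f \<in> D" and m_in_D: "m \<in> D"
  using couple_in_D couple_fm by auto

lemma rank_m_f: "w m < w f" and rank_g2_f: "w g2 < w f"
  using rank_m_g1 rank_g1_f rank_g2_g1 by auto

lemma gadget_distinct: "f \<noteq> m" "g1 \<noteq> f" "g1 \<noteq> m" "g2 \<noteq> f" "g1 \<noteq> g2"
  using rank_m_g1 rank_g1_f rank_g2_g1 by auto

lemma G_subset_D: "G \<subseteq> D"
  using f_in_D m_in_D g1_in_D g2_in_D by auto

lemma card_G: "card G = 4"
  using gadget_distinct g2_ne_m by auto

end

locale gadget_profile = gadget H \<kappa> S C P0 f m g1 g2 z h1 h2
  for H :: "'h set" and \<kappa> S and C :: "('d \<times> 'd) set" and P0 f m g1 g2 z h1 h2 +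
  fixes t :: "'d \<Rightarrow> 'h" and idx :: "'h \<Rightarrow> nat"
  assumes destination_in_H: "\<forall>d\<in>world. t d \<in> H"
    and card_destined:
      "\<forall>h\<in>H. card {d \<in> world. t d = h} = (if h = h1 \<or> h = h2 then \<kappa> h - 2 else \<kappa> h)"
    and destined_h1_above_g1: "\<forall>v\<in>world. t v = h1 \<longrightarrow> w g1 < w v"
    and destined_h1_top: "\<forall>v\<in>world. \<forall>u\<in>world. t v = h1 \<longrightarrow> t u \<noteq> h1 \<longrightarrow> w u < w v"
    and inj_idx: "inj_on idx H" and idx_less: "\<forall>h\<in>H. idx h < card H"
begin

definition destined :: "'h \<Rightarrow> 'd set" where
  "destined h = {d \<in> world. t d = h}"

lemma destined_subset: "destined h \<subseteq> world"
  unfolding destined_def by auto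

lemma finite_destined: "finite (destined h)"
  using finite_D destined_subset finite_subset by blast

lemma card_destined_h1: "card (destined h1) = \<kappa> h1 - 2"
  and card_destined_h2: "card (destined h2) = \<kappa> h2 - 2"
  and card_destined_other: "h \<in> H \<Longrightarrow> h \<noteq> h1 \<Longrightarrow> h \<noteq> h2 \<Longrightarrow> card (destined h) = \<kappa> h"
  using card_destined h1_in_H h2_in_H unfolding destined_def by auto

lemma card_destined_h12: "card (destined h1 \<union> destined h2) = \<kappa> h1 + \<kappa> h2 - 4"
  using card_Un_disjoint[OF finite_destined finite_destined, of h1 h2] h1_ne_h2
    card_destined_h1 card_destined_h2 kappa_ge_2[OF h1_in_H] kappa_ge_2[OF h2_in_H]
  unfolding destined_def by auto

section \<open>The preference profile\<close>

definition first_choice :: "'d \<Rightarrow> 'h" where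
  "first_choice d = (if d \<in> G then h1 else t d)"

definition second_choice :: "'d \<Rightarrow> 'h" where
  "second_choice d = (if d \<in> G \<or> t d = h1 then h2 else h1)"

definition choice_rank :: "'d \<Rightarrow> 'h \<Rightarrow> nat" where
  "choice_rank d h =
     (if h = first_choice d then 0 else if h = second_choice d then 1 else idx h + 2)"

definition opt_rank :: "'d \<Rightarrow> 'h option \<Rightarrow> nat" where
  "opt_rank d x = (case x of None \<Rightarrow> card H + 2 | Some h \<Rightarrow> choice_rank d h)"

definition Pdoc :: "'d \<Rightarrow> 'h option rel" where
  "Pdoc d = {(x, y). x \<in> Hbar H \<and> y \<in> Hbar H \<and> opt_rank d x < opt_rank d y}"

definition resp_key :: "'d \<Rightarrow> 'd \<Rightarrow> 'h option \<times> 'h option \<Rightarrow> nat \<times> nat \<times> nat" where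
  "resp_key a b p =
     (if fst p = None \<or> snd p = None then 1 else 0, opt_rank a (fst p), opt_rank b (snd p))"

definition Presp :: "'d \<Rightarrow> 'd \<Rightarrow> ('h option \<times> 'h option) rel" where
  "Presp a b =
     {(p, q). p \<in> Hbar H \<times> Hbar H \<and> q \<in> Hbar H \<times> Hbar H \<and> resp_key a b p < resp_key a b q}"

text \<open>Putting (h1, h1) and (h2, h2) on top for (f, m) is the departure from
  responsiveness that RVT allows.\<close>

definition together_key :: "'h option \<times> 'h option \<Rightarrow> nat \<times> nat \<times> nat \<times> nat" where
  "together_key p =
     (if p = (Some h1, Some h1) then 0 else if p = (Some h2, Some h2) then 1 else 2,
      resp_key f m p)"

definition Pcouple :: "'d \<times> 'd \<Rightarrow> ('h option \<times> 'h option) rel" where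
  "Pcouple c = (if c = (f, m)
     then {(p, q). p \<in> Hbar H \<times> Hbar H \<and> q \<in> Hbar H \<times> Hbar H \<and> together_key p < together_key q}
     else Presp (fst c) (snd c))"

definition Phosp :: "'h \<Rightarrow> 'd set rel" where
  "Phosp h = weight_pref D w (\<kappa> h)"

lemma first_ne_second: "first_choice d \<noteq> second_choice d"
  unfolding first_choice_def second_choice_def using h1_ne_h2 by auto

lemma choice_rank_first: "choice_rank d (first_choice d) = 0"
  unfolding choice_rank_def by simp

lemma choice_rank_pos: "h \<noteq> first_choice d \<Longrightarrow> 0 < choice_rank d h"
  unfolding choice_rank_def by simp

lemma choice_rank_G:
  assumes "d \<in> G"
  shows "choice_rank d h1 = 0" "choice_rank d h2 = 1" "h \<noteq> h1 \<Longrightarrow> h \<noteq> h2 \<Longrightarrow> 2 \<le> choice_rank d h"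
  using assms h1_ne_h2 unfolding choice_rank_def first_choice_def second_choice_def by auto

lemma choice_rank_less: "h \<in> H \<Longrightarrow> choice_rank d h < card H + 2"
  unfolding choice_rank_def using idx_less by auto

lemma inj_on_choice_rank: "inj_on (choice_rank d) H"
  by (rule inj_onI)
    (use inj_idx first_ne_second in \<open>auto simp: choice_rank_def inj_on_def split: if_splits\<close>)

lemma opt_rank_less_None: "x \<in> Hbar H \<Longrightarrow> x \<noteq> None \<Longrightarrow> opt_rank d x < opt_rank d None"
  unfolding opt_rank_def Hbar_def using choice_rank_less by auto

lemma inj_on_opt_rank: "inj_on (opt_rank d) (Hbar H)"
proof (rule inj_onI)
  fix x y assume xy: "x \<in> Hbar H" "y \<in> Hbar H" "opt_rank d x = opt_rank d y"
  then show "x = y"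
    using opt_rank_less_None[of x d] opt_rank_less_None[of y d] inj_on_choice_rank[of d]
    unfolding opt_rank_def Hbar_def inj_on_def by (cases x; cases y) auto
qed

lemma doctor_pref_Pdoc: "doctor_pref H (Pdoc d)"
  unfolding doctor_pref_def Pdoc_def
  using pref_on_key_less[OF inj_on_opt_rank] opt_rank_less_None by (auto simp: Hbar_def)

lemma Pdoc_Some_iff: "x \<in> H \<Longrightarrow> y \<in> H \<Longrightarrow> (Some x, Some y) \<in> Pdoc d \<longleftrightarrow> choice_rank d x < choice_rank d y"
  unfolding Pdoc_def opt_rank_def Hbar_def by auto

lemma inj_on_resp_key: "inj_on (resp_key a b) (Hbar H \<times> Hbar H)"
  using inj_on_opt_rank unfolding inj_on_def resp_key_def by (auto simp: prod_eq_iff)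

lemma resp_key_less_iff:
  assumes "h \<in> Hbar H" "x \<in> Hbar H" "y \<in> Hbar H"
  shows "resp_key a b (h, x) < resp_key a b (h, y) \<longleftrightarrow> opt_rank b x < opt_rank b y"
    and "resp_key a b (x, h) < resp_key a b (y, h) \<longleftrightarrow> opt_rank a x < opt_rank a y"
proof -
  have "opt_rank d (Some h') < opt_rank d None" "\<not> opt_rank d None < opt_rank d (Some h')"
    if "Some h' \<in> Hbar H" for d h'
    using opt_rank_less_None[of "Some h'" d] that by auto
  then show "resp_key a b (h, x) < resp_key a b (h, y) \<longleftrightarrow> opt_rank b x < opt_rank b y"
    and "resp_key a b (x, h) < resp_key a b (y, h) \<longleftrightarrow> opt_rank a x < opt_rank a y"
    using assms unfolding resp_key_def by (cases h; cases x; cases y; auto)+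
qed

lemma responsive_Presp: "responsive_couple H (Pdoc a) (Pdoc b) (Presp a b)"
  unfolding responsive_couple_def Presp_def Pdoc_def using resp_key_less_iff by auto

lemma Presp_Some_pairI:
  assumes "x \<in> H" "y \<in> H" "x' \<in> H" "y' \<in> H"
    and "choice_rank a x < choice_rank a x' \<or> x = x' \<and> choice_rank b y < choice_rank b y'"
  shows "((Some x, Some y), (Some x', Some y')) \<in> Presp a b"
  using assms unfolding Presp_def resp_key_def opt_rank_def Hbar_def by auto

lemma pref_on_Pcouple: "pref_on (Hbar H \<times> Hbar H) (Pcouple c)"
proof -
  have "inj_on together_key (Hbar H \<times> Hbar H)"
    using inj_on_resp_key[of f m] unfolding together_key_def inj_on_def by auto
  then show ?thesis
    unfolding Pcouple_def Presp_def using pref_on_key_less[OF inj_on_resp_key] pref_on_key_less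
    by auto
qed

lemma couple_pref_Pcouple: "couple_pref H (Pcouple c)"
  unfolding couple_pref_def
  using pref_on_Pcouple h1_ne_h2
  by (auto simp: Pcouple_def Presp_def together_key_def resp_key_def Hbar_def)

lemma together_key_lift:
  assumes h: "h \<in> H" and less: "resp_key f m (Some h, Some h) < resp_key f m x"
  shows "together_key (Some h, Some h) < together_key x"
proof -
  have fm: "f \<in> G" "m \<in> G" by auto
  have key1: "resp_key f m (Some h1, Some h1) = (0, 0, 0)"
    and key2: "resp_key f m (Some h2, Some h2) = (0, 1, 1)"
    using choice_rank_G[OF fm(1)] choice_rank_G[OF fm(2)] unfolding resp_key_def opt_rank_def
    by auto
  have x1: "x \<noteq> (Some h1, Some h1)"
    using less key1 by (cases "resp_key f m (Some h, Some h)") auto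
  consider "h = h1" | "h = h2" | "h \<noteq> h1" "h \<noteq> h2" by blast
  then show ?thesis
  proof cases
    case 1
    then show ?thesis using x1 unfolding together_key_def by auto
  next
    case 2
    then have "x \<noteq> (Some h2, Some h2)" using less by auto
    then show ?thesis using 2 x1 h1_ne_h2 unfolding together_key_def by auto
  next
    case 3
    then have "(0, 1, 1) < resp_key f m (Some h, Some h)"
      using choice_rank_G(3)[OF fm(1) 3] unfolding resp_key_def opt_rank_def by auto
    then have "x \<noteq> (Some h2, Some h2)" using less key2 by auto
    then show ?thesis using 3 x1 less unfolding together_key_def by auto
  qed
qed

lemma RVT_Pcouple: "RVT H (Pdoc a) (Pdoc b) (Pcouple (a, b))"
  unfolding RVT_def
proof (intro exI conjI)
  show "pref_on (Hbar H \<times> Hbar H) (Presp a b)"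
    unfolding Presp_def by (rule pref_on_key_less[OF inj_on_resp_key])
  show "responsive_couple H (Pdoc a) (Pdoc b) (Presp a b)" by (rule responsive_Presp)
  show "\<forall>h\<in>H. \<forall>x\<in>Hbar H \<times> Hbar H.
      ((Some h, Some h), x) \<in> Presp a b \<longrightarrow> ((Some h, Some h), x) \<in> Pcouple (a, b)"
    using together_key_lift unfolding Pcouple_def Presp_def by (auto simp: Hbar_def)
  show "\<forall>x\<in>Hbar H. \<forall>y\<in>Hbar H. \<forall>x'\<in>Hbar H. \<forall>y'\<in>Hbar H. x \<noteq> y \<longrightarrow> x' \<noteq> y' \<longrightarrow>
      (((x, y), (x', y')) \<in> Presp a b \<longleftrightarrow> ((x, y), (x', y')) \<in> Pcouple (a, b))"
    unfolding Pcouple_def Presp_def together_key_def by auto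
qed

lemma hosp_pref_CPI_Phosp: "h \<in> H \<Longrightarrow> hosp_pref_CPI D (\<kappa> h) P0 (Phosp h)"
  unfolding Phosp_def using hosp_pref_CPI_weight_pref[OF finite_D indiv_P0] kappa_ge_2 by fastforce

section \<open>Stable matchings fill every seat\<close>

abbreviation "A \<mu> h \<equiv> assigned D \<mu> h"
abbreviation "stab \<mu> \<equiv> stable H \<kappa> S C Pdoc Pcouple Phosp \<mu>"

lemma assigned_iff: "d \<in> A \<mu> h \<longleftrightarrow> d \<in> D \<and> \<mu> d = Some h"
  unfolding assigned_def by auto

lemma finite_assigned: "finite (A \<mu> h)"
  using finite_D by (rule finite_subset[rotated]) (auto simp: assigned_def)

lemma disjoint_assigned: "h \<noteq> h' \<Longrightarrow> A \<mu> h \<inter> A \<mu> h' = {}"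
  by (auto simp: assigned_iff)

lemma interested_add:
  assumes "card (A \<mu> h \<union> X) \<le> \<kappa> h" "X \<subseteq> D" "x \<in> X - A \<mu> h"
  shows "interested \<kappa> D Phosp \<mu> h X"
proof (rule interested_weight_prefI[where R = "{}"])
  have "card (A \<mu> h) \<le> card (A \<mu> h \<union> X)"
    using finite_assigned finite_subset[OF assms(2) finite_D] by (intro card_mono) auto
  then show "card (A \<mu> h) \<le> \<kappa> h" using assms(1) by linarith
qed (use assms finite_D inj_on_rank in \<open>auto simp: Phosp_def\<close>)

lemma interested_exchange:
  assumes "card (A \<mu> h) \<le> \<kappa> h" "R \<subseteq> A \<mu> h" "X \<subseteq> D" "R \<inter> X = {}"
    and "card (X - A \<mu> h) \<le> card R" "x \<in> X - A \<mu> h" "\<forall>y\<in>R. w y < w x"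
  shows "interested \<kappa> D Phosp \<mu> h X"
proof (rule interested_weight_prefI[where R = R and x = x and w = w])
  have "(A \<mu> h - R) \<union> X = (A \<mu> h - R) \<union> (X - A \<mu> h)" using assms(4) by auto
  then have "card ((A \<mu> h - R) \<union> X) \<le> card (A \<mu> h - R) + card (X - A \<mu> h)"
    by (simp add: card_Un_le)
  also have "\<dots> = card (A \<mu> h) - card R + card (X - A \<mu> h)"
    using assms(2) finite_subset[OF assms(2) finite_assigned] by (simp add: card_Diff_subset)
  also have "\<dots> \<le> card (A \<mu> h)"
    using assms(5) card_mono[OF finite_assigned assms(2)] by linarith
  finally show "card ((A \<mu> h - R) \<union> X) \<le> \<kappa> h" using assms(1) by linarith
  show "Phosp h = weight_pref D w (\<kappa> h)" by (rule Phosp_def)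
  show "\<forall>y\<in>R - X. w y < w x" using assms(7) by blast
qed (use assms finite_D inj_on_rank in auto)

lemma stable_is_matching: "stab \<mu> \<Longrightarrow> is_matching H \<kappa> D \<mu>"
  unfolding stable_def by auto

lemma stable_no_blocking_single:
  "stab \<mu> \<Longrightarrow> s \<in> S \<Longrightarrow> h \<in> H \<Longrightarrow> (Some h, \<mu> s) \<in> Pdoc s \<Longrightarrow> interested \<kappa> D Phosp \<mu> h {s} \<Longrightarrow> False"
  unfolding stable_def blocks_single_def by auto

lemma stable_no_blocking_couple:
  "stab \<mu> \<Longrightarrow> c \<in> C \<Longrightarrow> hf \<in> H \<Longrightarrow> hm \<in> H \<Longrightarrow> blocks_couple \<kappa> D Pcouple Phosp \<mu> hf hm c \<Longrightarrow> False"
  unfolding stable_def by auto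

lemma stable_in_Hbar: "stab \<mu> \<Longrightarrow> d \<in> D \<Longrightarrow> \<mu> d \<in> Hbar H"
  using stable_is_matching unfolding is_matching_def by auto

lemma card_unmatched_le_free_seats:
  assumes "stab \<mu>" "U \<subseteq> D" "\<forall>u\<in>U. \<mu> u = None"
  shows "card U \<le> (\<Sum>h\<in>H. \<kappa> h - card (A \<mu> h))"
proof -
  have "card U \<le> card {d \<in> D. \<mu> d = None}"
    using assms(2,3) finite_D by (intro card_mono) auto
  then show ?thesis
    using card_unmatched_eq_free_seats[OF finite_H finite_D stable_is_matching[OF assms(1)] sum_kappa]
    by simp
qed

lemma ex_free_seat:
  assumes "stab \<mu>" "u \<in> D" "\<mu> u = None"
  obtains h where "h \<in> H" "card (A \<mu> h) < \<kappa> h"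
proof -
  have "1 \<le> (\<Sum>h\<in>H. \<kappa> h - card (A \<mu> h))"
    using card_unmatched_le_free_seats[of \<mu> "{u}"] assms by simp
  moreover have "(\<Sum>h\<in>H. \<kappa> h - card (A \<mu> h)) = 0" if "\<forall>h\<in>H. \<not> card (A \<mu> h) < \<kappa> h"
    using that by (intro sum.neutral) auto
  ultimately show thesis using that by force
qed

lemma Pcouple_over_unmatched:
  assumes "hf \<in> H" "hm \<in> H" "x \<in> Hbar H" "y \<in> Hbar H" "x = None \<or> y = None"
  shows "((Some hf, Some hm), (x, y)) \<in> Pcouple c"
  using couple_pref_Pcouple[of c] assms unfolding couple_pref_def Hbar_def by auto

lemma stable_couple_not_both_unmatched:
  assumes st: "stab \<mu>" and c: "(a, b) \<in> C" and none: "\<mu> a = None" "\<mu> b = None"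
  shows False
proof -
  have ab: "a \<in> D" "b \<in> D" "a \<noteq> b" using couple_in_D[OF c] couple_rank_less[OF c] by auto
  have "card {a, b} \<le> (\<Sum>h\<in>H. \<kappa> h - card (A \<mu> h))"
    by (rule card_unmatched_le_free_seats[OF st]) (use ab none in auto)
  then have free2: "2 \<le> (\<Sum>h\<in>H. \<kappa> h - card (A \<mu> h))" using ab by simp
  have notA: "a \<notin> A \<mu> h" "b \<notin> A \<mu> h" for h using none by (auto simp: assigned_iff)
  have card_insert: "card (A \<mu> h \<union> X) = card (A \<mu> h) + card X" if "X \<subseteq> {a, b}" for h X
  proof -
    have "finite X" using that by (rule finite_subset) simp
    then show ?thesis using that notA by (subst card_Un_disjoint[OF finite_assigned]) auto
  qed
  have prefers: "((Some hf, Some hm), (\<mu> a, \<mu> b)) \<in> Pcouple (a, b)" if "hf \<in> H" "hm \<in> H" for hf hm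
    by (rule Pcouple_over_unmatched) (use that none in \<open>auto simp: Hbar_def\<close>)
  from sum_ge_2_cases[OF finite_H free2] show False
  proof cases
    case (1 h)
    have "interested \<kappa> D Phosp \<mu> h {a, b}"
      using 1 ab notA card_insert[of "{a, b}" h] by (intro interested_add[of _ _ _ a]) auto
    then show False
      using stable_no_blocking_couple[OF st c 1(1) 1(1)] prefers[OF 1(1) 1(1)]
      by (auto intro: blocks_coupleI)
  next
    case (2 h h')
    have "interested \<kappa> D Phosp \<mu> h {a}" "interested \<kappa> D Phosp \<mu> h' {b}"
      using 2 ab notA card_insert[of "{a}" h] card_insert[of "{b}" h']
      by (auto intro!: interested_add)
    then show False
      using stable_no_blocking_couple[OF st c 2(1,2)] prefers[OF 2(1,2)] 2(3)
      by (auto intro: blocks_coupleI)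
  qed
qed

lemma stable_couple_not_one_unmatched:
  assumes st: "stab \<mu>" and c: "(u, p) \<in> C \<or> (p, u) \<in> C"
    and u: "\<mu> u = None" and p: "\<mu> p = Some hp"
  shows False
proof -
  have uD: "u \<in> D" and pD: "p \<in> D" using c couple_in_D by auto
  have hp: "hp \<in> H" using stable_in_Hbar[OF st pD] p by (auto simp: Hbar_def)
  obtain h where h: "h \<in> H" "card (A \<mu> h) < \<kappa> h" using ex_free_seat[OF st uD u] .
  have uA: "u \<notin> A \<mu> h" using u by (simp add: assigned_iff)
  have "card (A \<mu> h \<union> {u}) \<le> \<kappa> h" using h(2) uA finite_assigned[of \<mu> h] by simp
  then have single: "interested \<kappa> D Phosp \<mu> h {u}"
    using uD uA by (intro interested_add[of _ _ _ u]) auto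
  have "A \<mu> h \<union> {u, p} = A \<mu> h \<union> {u}" if "h = hp" using that p pD by (auto simp: assigned_iff)
  then have "card (A \<mu> h \<union> {u, p}) \<le> \<kappa> h" if "h = hp"
    using that \<open>card (A \<mu> h \<union> {u}) \<le> \<kappa> h\<close> by simp
  then have both: "interested \<kappa> D Phosp \<mu> h X" if "h = hp" "X = {u, p} \<or> X = {p, u}" for X
    using that uD pD uA by (intro interested_add[of _ _ _ u]) (auto simp: insert_commute)
  have prefers: "((Some hf, Some hm), (\<mu> a, \<mu> b)) \<in> Pcouple (a, b)"
    if "hf \<in> H" "hm \<in> H" "a \<in> D" "b \<in> D" "\<mu> a = None \<or> \<mu> b = None" for hf hm a b
    by (rule Pcouple_over_unmatched) (use that stable_in_Hbar[OF st] in auto)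
  from c show False
  proof
    assume c: "(u, p) \<in> C"
    have "blocks_couple \<kappa> D Pcouple Phosp \<mu> h hp (u, p)"
      by (rule blocks_coupleI) (use prefers[OF h(1) hp uD pD] u p single both in auto)
    then show False using stable_no_blocking_couple[OF st c h(1) hp] by blast
  next
    assume c: "(p, u) \<in> C"
    have "blocks_couple \<kappa> D Pcouple Phosp \<mu> hp h (p, u)"
      by (rule blocks_coupleI) (use prefers[OF hp h(1) pD uD] u p single both in auto)
    then show False using stable_no_blocking_couple[OF st c hp h(1)] by blast
  qed
qed

lemma stable_matched:
  assumes st: "stab \<mu>" and d: "d \<in> D"
  obtains h where "h \<in> H" "\<mu> d = Some h"
proof (cases "\<mu> d")
  case None
  show thesis
  proof (cases "d \<in> S")
    case True
    obtain h where h: "h \<in> H" "card (A \<mu> h) < \<kappa> h" using ex_free_seat[OF st d None] .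
    have dA: "d \<notin> A \<mu> h" using None by (simp add: assigned_iff)
    have "card (A \<mu> h \<union> {d}) \<le> \<kappa> h" using h(2) dA finite_assigned[of \<mu> h] by simp
    then have "interested \<kappa> D Phosp \<mu> h {d}" using d dA by (intro interested_add[of _ _ _ d]) auto
    moreover have "(Some h, \<mu> d) \<in> Pdoc d" using doctor_pref_Pdoc[of d] h(1) None
      unfolding doctor_pref_def by auto
    ultimately show thesis using stable_no_blocking_single[OF st True h(1)] by blast
  next
    case False
    then obtain p where c: "(d, p) \<in> C \<or> (p, d) \<in> C" using doctor_cases[OF d] by blast
    then have "p \<in> D" using couple_in_D by blast
    then show thesis
      using stable_in_Hbar[OF st, of p] stable_couple_not_one_unmatched[OF st c None]
        stable_couple_not_both_unmatched[OF st, of d p]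
        stable_couple_not_both_unmatched[OF st, of p d]
        c None by (cases "\<mu> p") (auto simp: Hbar_def)
  qed
next
  case (Some h)
  then show thesis using that stable_in_Hbar[OF st d] by (auto simp: Hbar_def)
qed

lemma stable_full:
  assumes st: "stab \<mu>" and h: "h \<in> H"
  shows "card (A \<mu> h) = \<kappa> h"
proof -
  have "{d \<in> D. \<mu> d = None} = {}" using stable_matched[OF st]
    by (metis (mono_tags, lifting) empty_Collect_eq option.distinct(1))
  then have "(\<Sum>h\<in>H. \<kappa> h - card (A \<mu> h)) = 0"
    using card_unmatched_eq_free_seats[OF finite_H finite_D stable_is_matching[OF st] sum_kappa]
    by (simp only: card.empty)
  then have "card (A \<mu> h) \<ge> \<kappa> h" using finite_H h by simp
  moreover have "card (A \<mu> h) \<le> \<kappa> h" using stable_is_matching[OF st] h unfolding is_matching_def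
    by blast
  ultimately show ?thesis by simp
qed

lemma card_assigned_h12: "stab \<mu> \<Longrightarrow> card (A \<mu> h1 \<union> A \<mu> h2) = \<kappa> h1 + \<kappa> h2"
  using card_Un_disjoint[OF finite_assigned finite_assigned disjoint_assigned[OF h1_ne_h2]]
    stable_full h1_in_H h2_in_H by simp

lemma Pcouple_other: "c \<noteq> (f, m) \<Longrightarrow> Pcouple c = Presp (fst c) (snd c)"
  unfolding Pcouple_def by simp

text \<open>The couple (f, m) is excluded because its preference is not responsive.\<close>

lemma no_justified_envy:
  assumes st: "stab \<mu>" and d: "d \<in> D" "d \<noteq> f" "d \<noteq> m" and h: "h \<in> H"
    and y: "\<mu> d = Some y" and pref: "choice_rank d h < choice_rank d y"
    and e: "e \<in> A \<mu> h" "w e < w d" "e \<notin> partners d"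
  shows False
proof -
  have yH: "y \<in> H" using stable_in_Hbar[OF st d(1)] y by (auto simp: Hbar_def)
  have dA: "d \<notin> A \<mu> h" using y pref by (auto simp: assigned_iff)
  have cap: "card (A \<mu> h) \<le> \<kappa> h" using stable_full[OF st h] by simp
  have move: "interested \<kappa> D Phosp \<mu> h X"
    if "X = {d} \<or> (X = {d, p} \<or> X = {p, d}) \<and> p \<in> A \<mu> h \<and> p \<noteq> e" for X p
    by (rule interested_exchange[OF cap, of "{e}" _ d])
      (use that d e dA in \<open>auto simp: insert_Diff_if assigned_iff\<close>)
  show False
  proof (cases "d \<in> S")
    case True
    have "(Some h, \<mu> d) \<in> Pdoc d" using Pdoc_Some_iff[OF h yH] y pref by simp
    then show False using stable_no_blocking_single[OF st True h] move by blast
  next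
    case False
    then obtain p where c: "(d, p) \<in> C \<or> (p, d) \<in> C" using doctor_cases[OF d(1)] by blast
    have p: "p \<in> partners d" "p \<noteq> e" using c e(3) unfolding partners_def by auto
    obtain hp where hp: "hp \<in> H" "\<mu> p = Some hp"
      using stable_matched[OF st] couple_in_D c by blast
    have "p \<in> A \<mu> hp" using hp couple_in_D c by (auto simp: assigned_iff)
    from c show False
    proof
      assume c: "(d, p) \<in> C"
      have "((Some h, Some hp), (\<mu> d, \<mu> p)) \<in> Pcouple (d, p)"
        using Pcouple_other[of "(d, p)"] Presp_Some_pairI[OF h hp(1) yH hp(1)] d pref y hp by auto
      then have "blocks_couple \<kappa> D Pcouple Phosp \<mu> h hp (d, p)"
        by (rule blocks_coupleI) (use move \<open>p \<in> A \<mu> hp\<close> y pref hp p in auto)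
      then show False using stable_no_blocking_couple[OF st c h hp(1)] by blast
    next
      assume c: "(p, d) \<in> C"
      have "((Some hp, Some h), (\<mu> p, \<mu> d)) \<in> Pcouple (p, d)"
        using Pcouple_other[of "(p, d)"] Presp_Some_pairI[OF hp(1) h hp(1) yH] d pref y hp by auto
      then have "blocks_couple \<kappa> D Pcouple Phosp \<mu> hp h (p, d)"
        by (rule blocks_coupleI) (use move \<open>p \<in> A \<mu> hp\<close> y pref hp p in auto)
      then show False using stable_no_blocking_couple[OF st c hp(1) h] by blast
    qed
  qed
qed

text \<open>The couple (d, p) blocks by moving d to the seat of its partner p at h and p to x.\<close>

lemma no_couple_envy:
  assumes st: "stab \<mu>" and c: "(d, p) \<in> C" "d \<noteq> f" and h: "h \<in> H" and x: "x \<in> H" "x \<noteq> h"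
    and y: "\<mu> d = Some y" and pref: "choice_rank d h < choice_rank d y" and p: "\<mu> p = Some h"
    and e: "e \<in> A \<mu> h" "w e < w d" and q: "q \<in> A \<mu> x" "w q < w p"
  shows False
proof -
  have dD: "d \<in> D" and pD: "p \<in> D" using couple_in_D[OF c(1)] by auto
  have yH: "y \<in> H" using stable_in_Hbar[OF st dD] y by (auto simp: Hbar_def)
  have dA: "d \<notin> A \<mu> h" and pA: "p \<notin> A \<mu> x" using y pref p x(2) by (auto simp: assigned_iff)
  have "((Some h, Some x), (\<mu> d, \<mu> p)) \<in> Pcouple (d, p)"
    using Pcouple_other[of "(d, p)"] Presp_Some_pairI[OF h x(1) yH h] c pref y p by auto
  moreover have "interested \<kappa> D Phosp \<mu> h {d}"
    by (rule interested_exchange[of _ _ "{e}" _ d])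
      (use stable_full[OF st h] dD dA e in \<open>auto simp: insert_Diff_if\<close>)
  moreover have "interested \<kappa> D Phosp \<mu> x {p}"
    by (rule interested_exchange[of _ _ "{q}" _ p])
      (use stable_full[OF st x(1)] pD pA q in \<open>auto simp: insert_Diff_if\<close>)
  ultimately have "blocks_couple \<kappa> D Pcouple Phosp \<mu> h x (d, p)"
    using x(2) by (intro blocks_coupleI) auto
  then show False using stable_no_blocking_couple[OF st c(1) h x(1)] by blast
qed

section \<open>No stable matching\<close>

lemma Pcouple_fm_h1_top:
  "p \<in> Hbar H \<times> Hbar H \<Longrightarrow> p \<noteq> (Some h1, Some h1) \<Longrightarrow> ((Some h1, Some h1), p) \<in> Pcouple (f, m)"
  unfolding Pcouple_def together_key_def using h1_in_H by (auto simp: Hbar_def)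

lemma Pcouple_fm_h2_second:
  "p \<in> Hbar H \<times> Hbar H \<Longrightarrow> p \<noteq> (Some h1, Some h1) \<Longrightarrow> p \<noteq> (Some h2, Some h2) \<Longrightarrow>
    ((Some h2, Some h2), p) \<in> Pcouple (f, m)"
  unfolding Pcouple_def together_key_def using h2_in_H h1_ne_h2 by (auto simp: Hbar_def)

lemma Pcouple_fm_lexI:
  assumes "x \<in> H" "y \<in> H" "x' \<in> H" "y' \<in> H"
    and "x \<noteq> y \<or> x \<noteq> h1 \<and> x \<noteq> h2" "x' \<noteq> y' \<or> x' \<noteq> h1 \<and> x' \<noteq> h2"
    and "choice_rank f x < choice_rank f x' \<or> x = x' \<and> choice_rank m y < choice_rank m y'"
  shows "((Some x, Some y), (Some x', Some y')) \<in> Pcouple (f, m)"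
  using Presp_Some_pairI[OF assms(1-4,7)] assms(5,6)
  unfolding Pcouple_def Presp_def together_key_def by auto

lemma stable_not_together_h1:
  assumes st: "stab \<mu>" and apart: "\<not> (\<mu> f = Some h1 \<and> \<mu> m = Some h1)"
    and int: "interested \<kappa> D Phosp \<mu> h1 {f, m}"
  shows False
proof -
  have "((Some h1, Some h1), (\<mu> f, \<mu> m)) \<in> Pcouple (f, m)"
    using Pcouple_fm_h1_top stable_in_Hbar[OF st] f_in_D m_in_D apart by auto
  then have "blocks_couple \<kappa> D Pcouple Phosp \<mu> h1 h1 (f, m)"
    using int by (intro blocks_coupleI) auto
  then show False using stable_no_blocking_couple[OF st couple_fm h1_in_H h1_in_H] by blast
qed

lemma stable_not_together_h2:
  assumes st: "stab \<mu>"
    and apart: "(\<mu> f, \<mu> m) \<noteq> (Some h1, Some h1)" "(\<mu> f, \<mu> m) \<noteq> (Some h2, Some h2)"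
    and int: "interested \<kappa> D Phosp \<mu> h2 {f, m}"
  shows False
proof -
  have "((Some h2, Some h2), (\<mu> f, \<mu> m)) \<in> Pcouple (f, m)"
    using Pcouple_fm_h2_second stable_in_Hbar[OF st] f_in_D m_in_D apart by auto
  then have "blocks_couple \<kappa> D Pcouple Phosp \<mu> h2 h2 (f, m)"
    using int by (intro blocks_coupleI) auto
  then show False using stable_no_blocking_couple[OF st couple_fm h2_in_H h2_in_H] by blast
qed

text \<open>The seats of E at the full hospital h go to f and m.\<close>

lemma interested_fm:
  assumes st: "stab \<mu>" and h: "h \<in> H" and E: "E \<subseteq> A \<mu> h" "card E = 2"
    and present: "{f, m} \<inter> A \<mu> h \<subseteq> E" and missing: "\<not> {f, m} \<subseteq> A \<mu> h"
    and below: "\<forall>y\<in>E - {f, m}. w y < w (if f \<in> A \<mu> h then m else f)"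
  shows "interested \<kappa> D Phosp \<mu> h {f, m}"
proof (rule interested_exchange[of _ _ "E - {f, m}" _ "if f \<in> A \<mu> h then m else f"])
  have "E \<inter> {f, m} = {f, m} \<inter> A \<mu> h" using E(1) present by blast
  then have "card (E - {f, m}) = 2 - card ({f, m} \<inter> A \<mu> h)"
    using E(2) by (simp add: card_Diff_subset_Int)
  moreover have "card ({f, m} - A \<mu> h) = 2 - card ({f, m} \<inter> A \<mu> h)"
    using gadget_distinct(1) by (simp add: card_Diff_subset_Int)
  ultimately show "card ({f, m} - A \<mu> h) \<le> card (E - {f, m})" by linarith
qed (use stable_full[OF st h] E missing below f_in_D m_in_D in auto)

definition placed :: "('d \<Rightarrow> 'h option) \<Rightarrow> 'd \<Rightarrow> bool" where
  "placed \<mu> d \<longleftrightarrow> (if d \<in> G then \<mu> d = Some h1 \<or> \<mu> d = Some h2 else \<mu> d = Some (t d))"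

lemma destined_assigned: "\<forall>v\<in>destined h. placed \<mu> v \<Longrightarrow> destined h \<subseteq> A \<mu> h"
  unfolding destined_def placed_def by (auto simp: assigned_iff)

lemma card_extra_seats:
  assumes st: "stab \<mu>" and h: "h = h1 \<or> h = h2" and dest: "destined h \<subseteq> A \<mu> h"
  shows "card (A \<mu> h - destined h) = 2"
proof -
  have "h \<in> H" "card (destined h) = \<kappa> h - 2"
    using h h1_in_H h2_in_H card_destined_h1 card_destined_h2 by auto
  then show ?thesis
    using card_Diff_subset[OF finite_destined dest] stable_full[OF st] kappa_ge_2 by simp
qed

lemma m_not_partner_g1: "m \<notin> partners g1"
  unfolding partners_def using couple_fm couple_snd_unique couple_fst_not_snd gadget_distinct by blast

text \<open>The four seats of h1 and h2 not taken by destined doctors go to f, g1, m and a doctor b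
  ranked below g1: every such split is blocked.\<close>

context
  fixes \<mu> b
  assumes st: "stab \<mu>" and b: "b \<in> D" "b \<notin> {f, g1, m}" "w b < w g1" "b \<notin> destined h1 \<union> destined h2"
    and dest: "destined h1 \<subseteq> A \<mu> h1" "destined h2 \<subseteq> A \<mu> h2"
    and split: "A \<mu> h1 \<union> A \<mu> h2 = destined h1 \<union> destined h2 \<union> {f, g1, m, b}"
begin

lemma gadget_seats_h1: "card (A \<mu> h1 - destined h1) = 2" "A \<mu> h1 - destined h1 \<subseteq> {f, g1, m, b}"
proof -
  show "card (A \<mu> h1 - destined h1) = 2" using card_extra_seats[OF st _ dest(1)] by simp
  show "A \<mu> h1 - destined h1 \<subseteq> {f, g1, m, b}"
    using split dest(2) disjoint_assigned[OF h1_ne_h2] by blast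
qed

lemma gadget_at_h1_or_h2:
  assumes "x \<in> {f, g1, m, b}"
  shows "\<mu> x = Some h1 \<longleftrightarrow> x \<in> A \<mu> h1 - destined h1" "x \<notin> A \<mu> h1 - destined h1 \<Longrightarrow> \<mu> x = Some h2"
proof -
  have notdest: "x \<notin> destined h1" "x \<notin> destined h2"
    using assms b(4) destined_subset[of h1] destined_subset[of h2] by auto
  moreover have "x \<in> D" using assms b(1) G_subset_D by auto
  ultimately show "\<mu> x = Some h1 \<longleftrightarrow> x \<in> A \<mu> h1 - destined h1" by (simp add: assigned_iff)
  show "x \<notin> A \<mu> h1 - destined h1 \<Longrightarrow> \<mu> x = Some h2"
    using split assms \<open>x \<in> D\<close> notdest by (auto simp: assigned_iff)
qed

lemma gadget_f_m_at_h1: "{f, m} \<subseteq> A \<mu> h1 - destined h1 \<Longrightarrow> False"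
proof -
  assume fm: "{f, m} \<subseteq> A \<mu> h1 - destined h1"
  then have "A \<mu> h1 - destined h1 = {f, m}"
    using gadget_seats_h1(1) gadget_distinct(1)
    by (metis card_2_iff card_subset_eq finite_insert finite.emptyI)
  then have "\<mu> g1 = Some h2" using gadget_at_h1_or_h2(2)[of g1] gadget_distinct by auto
  then show False
    using no_justified_envy[OF st g1_in_D gadget_distinct(2,3) h1_in_H _ _ _ rank_m_g1] m_not_partner_g1
      fm choice_rank_G[of g1] by auto
qed

lemma gadget_f_g1_at_h1: "A \<mu> h1 - destined h1 = {f, g1} \<Longrightarrow> False"
proof -
  assume X1: "A \<mu> h1 - destined h1 = {f, g1}"
  then have at: "\<mu> f = Some h1" "\<mu> m = Some h2" "\<mu> b = Some h2"
    using gadget_at_h1_or_h2[of f] gadget_at_h1_or_h2[of m] gadget_at_h1_or_h2[of b] b(2)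
      gadget_distinct
    by auto
  have "interested \<kappa> D Phosp \<mu> h2 {f, m}"
  proof (rule interested_fm[OF st h2_in_H, of "{m, b}"])
    show "{m, b} \<subseteq> A \<mu> h2" using at m_in_D b(1) by (auto simp: assigned_iff)
  qed (use at b(2,3) rank_g1_f h1_ne_h2 in \<open>auto simp: assigned_iff\<close>)
  then show False using stable_not_together_h2[OF st] at h1_ne_h2 by auto
qed

lemma gadget_f_b_at_h1: "A \<mu> h1 - destined h1 = {f, b} \<Longrightarrow> False"
proof -
  assume X1: "A \<mu> h1 - destined h1 = {f, b}"
  have at: "\<mu> f = Some h1" "\<mu> b = Some h1"
    using gadget_at_h1_or_h2(1)[of f] gadget_at_h1_or_h2(1)[of b] X1 by blast+
  have "\<mu> g1 = Some h2" "\<mu> m = Some h2"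
    by (rule gadget_at_h1_or_h2(2); use X1 gadget_distinct b(2) in auto)+
  note at = at this
  have bA: "b \<in> A \<mu> h1" using X1 by blast
  have envy: "choice_rank g1 h1 < choice_rank g1 h2" using choice_rank_G[of g1] by simp
  show False
  proof (cases "b \<in> partners g1")
    case False
    then show False
      using no_justified_envy[OF st g1_in_D gadget_distinct(2,3) h1_in_H at(3) envy bA b(3)]
      by blast
  next
    case True
    have "(b, g1) \<notin> C" using couple_rank_less[of b g1] b(3) by (meson less_not_sym)
    then have c: "(g1, b) \<in> C" using True unfolding partners_def by simp
    show False
    proof (cases "w b < w m")
      case True
      have mA: "m \<notin> A \<mu> h1" using at(4) h1_ne_h2 by (simp add: assigned_iff)
      have "{f, b} \<subseteq> A \<mu> h1" using X1 by blast
      then have "interested \<kappa> D Phosp \<mu> h1 {f, m}"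
        by (rule interested_fm[OF st h1_in_H]) (use b(2) mA True rank_m_f in auto)
      then show False using stable_not_together_h1[OF st] at h1_ne_h2 by auto
    next
      case False
      then have "w m < w b" using rank_eq_iff[OF m_in_D b(1)] b(2) by fastforce
      moreover have "m \<in> A \<mu> h2" using at m_in_D by (simp add: assigned_iff)
      ultimately show False
        using no_couple_envy[OF st c gadget_distinct(2) h1_in_H h2_in_H h1_ne_h2[symmetric] at(3)
            envy at(2)
            bA b(3)] by blast
    qed
  qed
qed

lemma gadget_f_at_h2: "f \<notin> A \<mu> h1 - destined h1 \<Longrightarrow> False"
proof -
  assume f: "f \<notin> A \<mu> h1 - destined h1"
  have notdest: "x \<notin> destined h1" if "x \<in> G" for x using that destined_subset by blast
  then have fA: "f \<notin> A \<mu> h1" using f by blast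
  have "{f, m} \<inter> A \<mu> h1 \<subseteq> A \<mu> h1 - destined h1" using notdest by blast
  moreover have "w y < w f" if "y \<in> A \<mu> h1 - destined h1 - {f, m}" for y
    using that gadget_seats_h1(2) rank_g1_f b(3) by auto
  ultimately have "interested \<kappa> D Phosp \<mu> h1 {f, m}"
    by (intro interested_fm[OF st h1_in_H _ gadget_seats_h1(1)]) (use fA in auto)
  then show False using stable_not_together_h1[OF st] fA f_in_D by (auto simp: assigned_iff)
qed

lemma gadget_split_impossible: False
proof (cases "f \<in> A \<mu> h1 - destined h1")
  case False
  then show False by (rule gadget_f_at_h2)
next
  case True
  obtain u v where uv: "A \<mu> h1 - destined h1 = {u, v}" "u \<noteq> v"
    using gadget_seats_h1(1) by (meson card_2_iff)
  then obtain x where x: "A \<mu> h1 - destined h1 = {f, x}" "x \<in> {g1, m, b}"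
    using True gadget_seats_h1(2) by (metis insert_commute insertE insert_subset singletonD)
  then consider "x = g1" | "x = m" | "x = b" by blast
  then show False
  proof cases
    case 1
    then show False using gadget_f_g1_at_h1 x(1) by blast
  next
    case 2
    then show False using gadget_f_m_at_h1 x(1) by blast
  next
    case 3
    then show False using gadget_f_b_at_h1 x(1) by blast
  qed
qed

end

definition highest_unplaced :: "('d \<Rightarrow> 'h option) \<Rightarrow> 'd \<Rightarrow> bool" where
  "highest_unplaced \<mu> d \<longleftrightarrow> d \<in> D \<and> \<not> placed \<mu> d \<and> (\<forall>e\<in>D. w d < w e \<longrightarrow> placed \<mu> e)"

lemma ex_highest_unplaced:
  assumes "d \<in> D" "\<not> placed \<mu> d"
  obtains d' where "highest_unplaced \<mu> d'"
proof -
  let ?U = "{d \<in> D. \<not> placed \<mu> d}"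
  have "finite (w ` ?U)" "w ` ?U \<noteq> {}" using finite_D assms by auto
  then obtain d' where d': "d' \<in> ?U" "w d' = Max (w ` ?U)"
    by (metis (no_types, lifting) Max_in imageE)
  have "placed \<mu> e" if "e \<in> D" "w d' < w e" for e
    using that d'(2) Max_ge[OF \<open>finite (w ` ?U)\<close>, of "w e"] by fastforce
  then show thesis using that d'(1) unfolding highest_unplaced_def by blast
qed

text \<open>A doctor below d at t d must be the partner e of d; then (d, e) blocks with e taking
  the seat of the lowest doctor z, whose partner lies in the gadget.\<close>

lemma unplaced_world_doctor_dominated:
  assumes st: "stab \<mu>" and d: "d \<in> world" "\<not> placed \<mu> d" and e: "e \<in> A \<mu> (t d)"
  shows "w d < w e"
proof (rule ccontr)
  assume "\<not> w d < w e"
  obtain y where y: "y \<in> H" "\<mu> d = Some y" using stable_matched[OF st] d(1) by blast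
  have ty: "t d \<noteq> y" using d y unfolding placed_def by auto
  have td: "t d \<in> H" using destination_in_H d(1) by blast
  have "e \<noteq> d" using e y ty by (auto simp: assigned_iff)
  then have ed: "w e < w d" using \<open>\<not> w d < w e\<close> rank_eq_iff[of e d] e d(1)
    by (auto simp: assigned_iff)
  have pref: "choice_rank d (t d) < choice_rank d y"
    using choice_rank_first[of d] choice_rank_pos[of y d] ty d(1) unfolding first_choice_def by auto
  have dfm: "d \<noteq> f" "d \<noteq> m" using d(1) by auto
  have envy: "e' \<in> partners d" if "e' \<in> A \<mu> (t d)" "w e' < w d" for e'
    using no_justified_envy[OF st _ dfm td y(2) pref that] d(1) by blast
  have c: "(d, e) \<in> C"
    using envy[OF e ed] couple_rank_less[of e d] ed unfolding partners_def by auto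
  obtain x where x: "x \<in> H" "\<mu> z = Some x" using stable_matched[OF st z_in_D] by blast
  have ze: "z \<noteq> e" using c z_partners d(1) by auto
  have "e \<in> D" using e by (simp add: assigned_iff)
  then have zlow: "w z < w e" using ze rank_z rank_eq_iff[OF z_in_D] by (metis neq0_conv)
  have "x \<noteq> t d"
  proof
    assume "x = t d"
    then have "z \<in> partners d" using envy[of z] x(2) z_in_D zlow ed by (simp add: assigned_iff)
    then show False using partners_unique[of z d e] ze envy[OF e ed] by blast
  qed
  moreover have "\<mu> e = Some (t d)" "z \<in> A \<mu> x" using e x z_in_D by (auto simp: assigned_iff)
  ultimately show False
    using no_couple_envy[OF st c dfm(1) td x(1) _ y(2) pref _ e ed _ zlow] by blast
qed

lemma highest_unplaced_world_count:
  assumes st: "stab \<mu>" and hu: "highest_unplaced \<mu> d" and d: "d \<in> world"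
  shows "\<kappa> (t d) \<le> card (destined (t d) - {d}) + card {g \<in> G. \<mu> g = Some (t d) \<and> w d < w g}"
proof -
  let ?S = "{g \<in> G. \<mu> g = Some (t d) \<and> w d < w g}"
  have "A \<mu> (t d) \<subseteq> (destined (t d) - {d}) \<union> ?S"
  proof
    fix e assume e: "e \<in> A \<mu> (t d)"
    have above: "w d < w e" using unplaced_world_doctor_dominated[OF st d _ e] hu
      unfolding highest_unplaced_def by blast
    moreover have "e \<in> D" "\<mu> e = Some (t d)" using e by (auto simp: assigned_iff)
    moreover have "placed \<mu> e" using hu above \<open>e \<in> D\<close> unfolding highest_unplaced_def by blast
    ultimately show "e \<in> (destined (t d) - {d}) \<union> ?S"
      unfolding placed_def destined_def by (auto split: if_splits)
  qed
  then have "card (A \<mu> (t d)) \<le> card ((destined (t d) - {d}) \<union> ?S)"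
    using finite_destined by (intro card_mono) auto
  also have "\<dots> \<le> card (destined (t d) - {d}) + card ?S" by (rule card_Un_le)
  finally show ?thesis using stable_full[OF st] destination_in_H d by simp
qed

text \<open>With three gadget doctors above d at h2, h1 holds its destined doctors and two
  further doctors that (f, m) can displace.\<close>

lemma highest_unplaced_h2_three_above:
  assumes st: "stab \<mu>" and hu: "highest_unplaced \<mu> d" and d: "d \<in> world" "t d = h2"
    and three: "3 \<le> card {g \<in> G. \<mu> g = Some h2 \<and> w d < w g}"
  shows False
proof -
  define S2 where "S2 = {g \<in> G. \<mu> g = Some h2 \<and> w d < w g}"
  have "S2 \<subseteq> G" unfolding S2_def by blast
  then have "card (G - S2) = card G - card S2"
    by (intro card_Diff_subset) (auto intro: finite_subset)
  then have "card (G - S2) \<le> 1" using three card_G unfolding S2_def by linarith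
  then have "card (G - S2) \<le> Suc 0" by simp
  then have "\<forall>x\<in>G - S2. \<forall>y\<in>G - S2. x = y" using card_le_Suc0_iff_eq[of "G - S2"] by blast
  then have one: "x = y" if "x \<in> G - S2" "y \<in> G - S2" for x y using that by blast
  have "S2 \<noteq> {}" using three[folded S2_def] by auto
  then have df: "w d < w f" unfolding S2_def using rank_g1_f rank_m_f rank_g2_f by auto
  have "\<forall>v\<in>destined h1. placed \<mu> v"
    using hu destined_h1_top d h1_ne_h2 unfolding highest_unplaced_def destined_def by fastforce
  then have dest: "destined h1 \<subseteq> A \<mu> h1" by (rule destined_assigned)
  have extra: "x \<in> G - S2 \<or> x \<notin> G \<and> \<not> w d < w x" if "x \<in> A \<mu> h1 - destined h1" for x
    using that hu h1_ne_h2 unfolding S2_def highest_unplaced_def placed_def destined_def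
    by (auto simp: assigned_iff)
  have apart: "\<not> (\<mu> f = Some h1 \<and> \<mu> m = Some h1)"
    using one[of f m] gadget_distinct(1) h1_ne_h2 unfolding S2_def by auto
  have "interested \<kappa> D Phosp \<mu> h1 {f, m}"
  proof (rule interested_fm[OF st h1_in_H _ card_extra_seats[OF st _ dest]])
    show "{f, m} \<inter> A \<mu> h1 \<subseteq> A \<mu> h1 - destined h1" using destined_subset by blast
    show "\<not> {f, m} \<subseteq> A \<mu> h1" using apart f_in_D m_in_D by (auto simp: assigned_iff)
    show "\<forall>y\<in>A \<mu> h1 - destined h1 - {f, m}. w y < w (if f \<in> A \<mu> h1 then m else f)"
    proof (intro ballI)
      fix y assume y: "y \<in> A \<mu> h1 - destined h1 - {f, m}"
      show "w y < w (if f \<in> A \<mu> h1 then m else f)"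
      proof (cases "f \<in> A \<mu> h1")
        case True
        then have "f \<in> G - S2" using destined_subset h1_ne_h2 extra[of f] by blast
        then have "m \<notin> G - S2" "y \<notin> G - S2" using one y gadget_distinct(1) by blast+
        then show ?thesis using True extra[of y] y unfolding S2_def by auto
      next
        case False
        then show ?thesis using extra[of y] y df rank_g1_f rank_g2_f by auto
      qed
    qed
  qed auto
  then show False using stable_not_together_h1[OF st apart] by blast
qed

lemma highest_unplaced_not_world:
  assumes st: "stab \<mu>" and hu: "highest_unplaced \<mu> d"
  shows "d \<notin> world"
proof
  assume d: "d \<in> world"
  let ?S = "{g \<in> G. \<mu> g = Some (t d) \<and> w d < w g}"
  have count: "\<kappa> (t d) \<le> card (destined (t d) - {d}) + card ?S"
    by (rule highest_unplaced_world_count[OF st hu d])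
  have "d \<in> destined (t d)" using d by (simp add: destined_def)
  then have dest: "card (destined (t d) - {d}) + 1 = card (destined (t d))"
    using finite_destined card_gt_0_iff by (metis Suc_eq_plus1 card_Suc_Diff1)
  consider "t d = h1" | "t d = h2" | "t d \<noteq> h1" "t d \<noteq> h2" by blast
  then show False
  proof cases
    case 1
    then have "?S \<subseteq> {f}"
      using destined_h1_above_g1 d rank_m_g1 rank_g2_g1 by fastforce
    then have "card ?S \<le> card {f}" by (intro card_mono) auto
    then show False using count dest 1 card_destined_h1 by simp
  next
    case 2
    show False
    proof (cases "3 \<le> card ?S")
      case True
      then show False using highest_unplaced_h2_three_above[OF st hu d] 2 by simp
    next
      case False
      then show False using count dest 2 card_destined_h2 by simp
    qed
  next
    case 3
    have "?S = {}"
      using hu 3 G_subset_D unfolding highest_unplaced_def placed_def by force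
    then have "card ?S = 0" by (simp only: card.empty)
    moreover have "card (destined (t d)) = \<kappa> (t d)"
      using card_destined_other[OF _ 3] destination_in_H d by blast
    ultimately show False using count dest by linarith
  qed
qed

lemma card_below_in_h12:
  assumes st: "stab \<mu>" and hu: "highest_unplaced \<mu> d" and d: "d \<notin> A \<mu> h1 \<union> A \<mu> h2"
  shows "4 - card {g \<in> G. w d < w g} \<le> card {e \<in> A \<mu> h1 \<union> A \<mu> h2. w e < w d}"
proof (rule card_below_ge)
  let ?Z = "destined h1 \<union> destined h2 \<union> {g \<in> G. w d < w g}"
  show "{e \<in> A \<mu> h1 \<union> A \<mu> h2. w d < w e} \<subseteq> ?Z"
    using hu unfolding highest_unplaced_def placed_def destined_def
    by (auto simp: assigned_iff split: if_splits)
  have "card (destined h1 \<union> destined h2) = \<kappa> h1 + \<kappa> h2 - 4" by (rule card_destined_h12)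
  moreover have "card {g \<in> G. w d < w g} \<le> card G" by (rule card_mono) auto
  moreover have "card (A \<mu> h1 \<union> A \<mu> h2) = \<kappa> h1 + \<kappa> h2" by (rule card_assigned_h12[OF st])
  ultimately show "card ?Z + (4 - card {g \<in> G. w d < w g}) \<le> card (A \<mu> h1 \<union> A \<mu> h2)"
    using card_Un_le[of "destined h1 \<union> destined h2" "{g \<in> G. w d < w g}"] card_G
      kappa_ge_2[OF h1_in_H] kappa_ge_2[OF h2_in_H] by linarith
  show "inj_on w (insert d (A \<mu> h1 \<union> A \<mu> h2))"
    using hu inj_on_rank unfolding highest_unplaced_def
    by (rule_tac inj_on_subset) (auto simp: assigned_iff)
qed (use d finite_assigned finite_destined in auto)

lemma highest_unplaced_G_elsewhere:
  assumes st: "stab \<mu>" and hu: "highest_unplaced \<mu> d" and d: "d \<in> G"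
  obtains x where "x \<in> H" "x \<noteq> h1" "x \<noteq> h2" "\<mu> d = Some x" "d \<notin> A \<mu> h1 \<union> A \<mu> h2"
proof -
  obtain x where x: "x \<in> H" "\<mu> d = Some x" using stable_matched[OF st] hu
    unfolding highest_unplaced_def by blast
  moreover have "x \<noteq> h1" "x \<noteq> h2" using hu d x(2) unfolding highest_unplaced_def placed_def by auto
  ultimately show thesis using that by (auto simp: assigned_iff)
qed

lemma highest_unplaced_not_f:
  assumes st: "stab \<mu>" and hu: "highest_unplaced \<mu> f"
  shows False
proof -
  obtain x where x: "x \<in> H" "x \<noteq> h1" "x \<noteq> h2" "\<mu> f = Some x" and fA: "f \<notin> A \<mu> h1 \<union> A \<mu> h2"
    using highest_unplaced_G_elsewhere[OF st hu] by blast
  have "2 \<le> card {e \<in> A \<mu> h1. w e < w f}"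
  proof (rule card_below_ge)
    show "{e \<in> A \<mu> h1. w f < w e} \<subseteq> destined h1"
      using hu rank_g1_f rank_m_f rank_g2_f unfolding highest_unplaced_def placed_def destined_def
      by (auto simp: assigned_iff split: if_splits)
    show "inj_on w (insert f (A \<mu> h1))"
      by (rule inj_on_subset[OF inj_on_rank]) (use f_in_D in \<open>auto simp: assigned_iff\<close>)
    show "card (destined h1) + 2 \<le> card (A \<mu> h1)"
      using card_destined_h1 stable_full[OF st h1_in_H] kappa_ge_2[OF h1_in_H] by simp
  qed (use fA finite_assigned finite_destined in auto)
  then obtain e where e: "e \<in> A \<mu> h1" "w e < w f" "e \<noteq> m"
    using ex_other_of_card_ge_2[of _ m] by blast
  obtain hm where hm: "hm \<in> H" "\<mu> m = Some hm" using stable_matched[OF st m_in_D] by blast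
  show False
  proof (cases "hm = h1")
    case True
    have "interested \<kappa> D Phosp \<mu> h1 {f, m}"
      by (rule interested_fm[OF st h1_in_H, of "{m, e}"])
        (use e hm True fA m_in_D in \<open>auto simp: assigned_iff\<close>)
    then show False using stable_not_together_h1[OF st] x by auto
  next
    case False
    have "choice_rank f h1 < choice_rank f x" using choice_rank_G[of f] x(2,3) by fastforce
    then have "((Some h1, Some hm), (\<mu> f, \<mu> m)) \<in> Pcouple (f, m)"
      using Pcouple_fm_lexI[OF h1_in_H hm(1) x(1) hm(1)] False x hm(2) by auto
    moreover have "interested \<kappa> D Phosp \<mu> h1 {f}"
      by (rule interested_exchange[of _ _ "{e}" _ f])
        (use stable_full[OF st h1_in_H] e fA f_in_D in \<open>auto simp: insert_Diff_if\<close>)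
    ultimately have "blocks_couple \<kappa> D Pcouple Phosp \<mu> h1 hm (f, m)"
      using False x hm by (intro blocks_coupleI) auto
    then show False using stable_no_blocking_couple[OF st couple_fm h1_in_H hm(1)] by blast
  qed
qed

lemma highest_unplaced_not_m:
  assumes st: "stab \<mu>" and hu: "highest_unplaced \<mu> m"
  shows False
proof -
  obtain x where x: "x \<in> H" "x \<noteq> h1" "x \<noteq> h2" "\<mu> m = Some x" and mA: "m \<notin> A \<mu> h1 \<union> A \<mu> h2"
    using highest_unplaced_G_elsewhere[OF st hu] by blast
  have "card {g \<in> G. w m < w g} \<le> card {f, g1, g2}" by (intro card_mono) auto
  then have "card {g \<in> G. w m < w g} \<le> 3" using gadget_distinct by simp
  then have "1 \<le> card {e \<in> A \<mu> h1 \<union> A \<mu> h2. w e < w m}" using card_below_in_h12[OF st hu mA]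
    by linarith
  then obtain e he where e: "e \<in> A \<mu> he" "w e < w m" and he: "he = h1 \<or> he = h2"
    by (metis (no_types, lifting) One_nat_def UnE card_eq_0_iff empty_Collect_eq not_one_le_zero)
  have heH: "he \<in> H" using he h1_in_H h2_in_H by blast
  have "placed \<mu> f" using hu f_in_D rank_m_f unfolding highest_unplaced_def by blast
  then obtain hf where hf: "hf = h1 \<or> hf = h2" "\<mu> f = Some hf" unfolding placed_def by auto
  have hfH: "hf \<in> H" using hf h1_in_H h2_in_H by blast
  have mhe: "m \<notin> A \<mu> he" using mA he by blast
  show False
  proof (cases "hf = he")
    case True
    have "interested \<kappa> D Phosp \<mu> he {f, m}"
    proof (rule interested_fm[OF st heH, of "{f, e}"])
      have "e \<noteq> f" using e(2) rank_m_f by (intro notI) simp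
      then show "card {f, e} = 2" by simp
    qed (use e hf True mhe f_in_D rank_m_f in \<open>auto simp: assigned_iff\<close>)
    then show False
      using stable_not_together_h1[OF st] stable_not_together_h2[OF st] he x by auto
  next
    case False
    have "choice_rank m he < choice_rank m x" using choice_rank_G[of m] he x(2,3) by fastforce
    then have "((Some hf, Some he), (\<mu> f, \<mu> m)) \<in> Pcouple (f, m)"
      using Pcouple_fm_lexI[OF hfH heH hfH x(1)] False x hf(2) by auto
    moreover have "interested \<kappa> D Phosp \<mu> he {m}"
      by (rule interested_exchange[of _ _ "{e}" _ m])
        (use stable_full[OF st heH] e mhe m_in_D in \<open>auto simp: insert_Diff_if\<close>)
    ultimately have "blocks_couple \<kappa> D Pcouple Phosp \<mu> hf he (f, m)"
      using False x hf by (intro blocks_coupleI) auto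
    then show False using stable_no_blocking_couple[OF st couple_fm hfH heH] by blast
  qed
qed

text \<open>Here the bound of card_below_in_h12 is attained: the doctors above g2 at h1 and h2 are
  exactly the destined ones together with f, g1 and m.\<close>

lemma highest_unplaced_g2_tight:
  assumes st: "stab \<mu>" and hu: "highest_unplaced \<mu> g2" and g2A: "g2 \<notin> A \<mu> h1 \<union> A \<mu> h2"
    and g2m: "w g2 < w m" and below: "{e \<in> A \<mu> h1 \<union> A \<mu> h2. w e < w g2} = {b}"
  shows False
proof -
  define Y where "Y = A \<mu> h1 \<union> A \<mu> h2"
  define U where "U = {e \<in> Y. w g2 < w e}"
  define Z where "Z = destined h1 \<union> destined h2 \<union> {f, g1, m}"
  have b: "b \<in> Y" "w b < w g2" using below unfolding Y_def by auto
  have YD: "Y \<subseteq> D" unfolding Y_def by (auto simp: assigned_iff)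
  have UZ: "U \<subseteq> Z"
    using hu rank_g2_g1 g2m unfolding U_def Y_def Z_def highest_unplaced_def placed_def destined_def
    by (auto simp: assigned_iff split: if_splits)
  have YU: "Y = U \<union> {b}"
  proof (intro equalityI subsetI)
    fix e assume e: "e \<in> Y"
    then have "w e \<noteq> w g2" using g2A YD rank_eq_iff[OF _ g2_in_D] unfolding Y_def by blast
    then show "e \<in> U \<union> {b}" using e below unfolding U_def Y_def by (auto simp: nat_neq_iff)
  qed (use b in \<open>auto simp: U_def\<close>)
  have "card Y = \<kappa> h1 + \<kappa> h2" unfolding Y_def by (rule card_assigned_h12[OF st])
  moreover have "card Y \<le> card U + 1" using card_Un_le[of U "{b}"] YU by simp
  moreover have "card Z = \<kappa> h1 + \<kappa> h2 - 1"
  proof -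
    have "(destined h1 \<union> destined h2) \<inter> {f, g1, m} = {}" unfolding destined_def by auto
    then show ?thesis
      using card_destined_h12 kappa_ge_2[OF h1_in_H] kappa_ge_2[OF h2_in_H] gadget_distinct
      unfolding Z_def by (simp add: card_Un_disjoint finite_destined)
  qed
  moreover have "finite Z" unfolding Z_def using finite_destined by simp
  ultimately have UZ_eq: "U = Z" using UZ card_mono[OF _ UZ] by (intro card_subset_eq) auto
  have "placed \<mu> v" if "v \<in> destined h1 \<union> destined h2" for v
    using that hu YD UZ_eq unfolding U_def Z_def highest_unplaced_def by blast
  then have dest: "destined h1 \<subseteq> A \<mu> h1" "destined h2 \<subseteq> A \<mu> h2"
    by (simp_all add: destined_assigned)
  show False
  proof (rule gadget_split_impossible[OF st _ _ _ _ dest])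
    show "b \<in> D" "b \<notin> {f, g1, m}" "w b < w g1"
      using b YD rank_g2_g1 rank_g1_f g2m by auto
    show "b \<notin> destined h1 \<union> destined h2"
    proof
      assume "b \<in> destined h1 \<union> destined h2"
      then have "b \<in> U" using UZ_eq unfolding Z_def by blast
      then show False using b(2) unfolding U_def by simp
    qed
    show "A \<mu> h1 \<union> A \<mu> h2 = destined h1 \<union> destined h2 \<union> {f, g1, m, b}"
      using YU UZ_eq unfolding Y_def Z_def by auto
  qed
qed

lemma highest_unplaced_not_g:
  assumes st: "stab \<mu>" and hu: "highest_unplaced \<mu> d" and d: "d = g1 \<or> d = g2"
  shows False
proof -
  have dG: "d \<in> G" and dfm: "d \<noteq> f" "d \<noteq> m" using d gadget_distinct g2_ne_m by auto
  obtain x where x: "x \<in> H" "x \<noteq> h1" "x \<noteq> h2" "\<mu> d = Some x" and dA: "d \<notin> A \<mu> h1 \<union> A \<mu> h2"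
    using highest_unplaced_G_elsewhere[OF st hu dG] by blast
  let ?B = "{e \<in> A \<mu> h1 \<union> A \<mu> h2. w e < w d}"
  have x_last: "choice_rank d h1 < choice_rank d x" "choice_rank d h2 < choice_rank d x"
    using choice_rank_G[OF dG] x(2,3) by fastforce+
  have envy: "e \<in> partners d" if "e \<in> ?B" for e
  proof -
    have dD: "d \<in> D" using hu unfolding highest_unplaced_def by blast
    from that consider "e \<in> A \<mu> h1" | "e \<in> A \<mu> h2" by blast
    then show ?thesis
      using no_justified_envy[OF st dD dfm h1_in_H x(4) x_last(1)]
        no_justified_envy[OF st dD dfm h2_in_H x(4) x_last(2)] that by cases blast+
  qed
  have count: "4 - card {g \<in> G. w d < w g} \<le> card ?B" by (rule card_below_in_h12[OF st hu dA])
  show False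
  proof (cases "d = g1 \<or> w m < w d")
    case True
    then have "card {g \<in> G. w d < w g} \<le> card {f, g1}"
      using d rank_g2_g1 rank_m_g1 by (intro card_mono) auto
    then have B2: "2 \<le> card ?B" using count gadget_distinct by simp
    then have "?B \<noteq> {}" using card_gt_0_iff[of ?B] by linarith
    then obtain e1 where e1: "e1 \<in> ?B" by blast
    obtain e2 where "e2 \<in> ?B" "e2 \<noteq> e1" using ex_other_of_card_ge_2[OF B2] by blast
    then show False using envy e1 partners_unique by blast
  next
    case False
    then have d2: "d = g2" and below_m: "w g2 < w m"
      using d rank_eq_iff[OF g2_in_D m_in_D] g2_ne_m by (auto simp: nat_neq_iff)
    have "card {g \<in> G. w d < w g} \<le> card {f, g1, m}" using d2 by (intro card_mono) auto
    then have "1 \<le> card ?B" using count gadget_distinct by simp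
    then have "?B \<noteq> {}" using card_gt_0_iff[of ?B] by linarith
    then obtain e0 where e0: "e0 \<in> ?B" by blast
    have "g2 \<noteq> z" using e0 d2 rank_z by auto
    then have "(g2, z) \<in> C" using g2_choice below_m by auto
    then have "z \<in> partners g2" unfolding partners_def by blast
    then have "?B = {z}" using envy e0 d2 partners_unique by blast
    then show False using highest_unplaced_g2_tight[OF st _ _ below_m] hu dA d2 by blast
  qed
qed

lemma all_placed_impossible:
  assumes st: "stab \<mu>" and placed: "\<forall>d\<in>D. placed \<mu> d"
  shows False
proof (rule gadget_split_impossible[OF st g2_in_D])
  show dest: "destined h1 \<subseteq> A \<mu> h1" "destined h2 \<subseteq> A \<mu> h2"
    using placed destined_subset by (intro destined_assigned; blast)+
  show "A \<mu> h1 \<union> A \<mu> h2 = destined h1 \<union> destined h2 \<union> G"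
  proof (intro equalityI subsetI)
    fix e assume "e \<in> A \<mu> h1 \<union> A \<mu> h2"
    then have e: "e \<in> D" "\<mu> e = Some h1 \<or> \<mu> e = Some h2" by (auto simp: assigned_iff)
    then have "e \<notin> G \<Longrightarrow> t e = h1 \<or> t e = h2" using placed unfolding placed_def by auto
    then show "e \<in> destined h1 \<union> destined h2 \<union> G" using e(1) unfolding destined_def by blast
  next
    fix e assume e: "e \<in> destined h1 \<union> destined h2 \<union> G"
    have "e \<in> G \<Longrightarrow> \<mu> e = Some h1 \<or> \<mu> e = Some h2" using placed G_subset_D unfolding placed_def
      by auto
    then show "e \<in> A \<mu> h1 \<union> A \<mu> h2" using e dest G_subset_D by (auto simp: assigned_iff)
  qed
  show "g2 \<notin> destined h1 \<union> destined h2" using destined_subset by blast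
qed (use gadget_distinct g2_ne_m rank_g2_g1 in auto)

theorem no_stable_matching: "\<not> stab \<mu>"
proof
  assume st: "stab \<mu>"
  show False
  proof (cases "\<forall>d\<in>D. placed \<mu> d")
    case True
    then show False by (rule all_placed_impossible[OF st])
  next
    case False
    then obtain d where hu: "highest_unplaced \<mu> d" using ex_highest_unplaced by blast
    then have "d \<in> G" using highest_unplaced_not_world[OF st] unfolding highest_unplaced_def
      by blast
    then show False
      using highest_unplaced_not_f[OF st] highest_unplaced_not_m[OF st]
        highest_unplaced_not_g[OF st] hu
      by blast
  qed
qed

end

section \<open>From a violation of SCPI to the profile\<close>

context gadget
begin

lemma card_world: "card world = card D - 4"
  using card_Diff_subset[OF _ G_subset_D] card_G by simp

lemma ex_top_world_above_g1:
  obtains V where "V \<subseteq> world" "card V = \<kappa> h1 - 2" "\<forall>v\<in>V. \<forall>u\<in>world - V. w u < w v"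
    "\<forall>v\<in>V. w g1 < w v"
proof -
  have fin: "finite world" using finite_D by simp
  have inj: "inj_on w world" by (rule inj_on_subset[OF inj_on_rank]) auto
  have "\<kappa> h1 - 2 \<le> card world"
    using card_world kappa_pair_le[OF h1_in_H h2_in_H h1_ne_h2] kappa_ge_2[OF h2_in_H] by linarith
  then have "\<exists>V\<subseteq>world. card V = \<kappa> h1 - 2 \<and> (\<forall>v\<in>V. \<forall>u\<in>world - V. w u < w v)"
    by (rule ex_top_subset[OF fin inj])
  then obtain V where V: "V \<subseteq> world" "card V = \<kappa> h1 - 2" "\<forall>v\<in>V. \<forall>u\<in>world - V. w u < w v"
    by blast
  let ?X = "{u \<in> world. w g1 < w u}"
  have "w g1 < w v" if v: "v \<in> V" for v
  proof (rule ccontr)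
    assume below: "\<not> w g1 < w v"
    have "u \<in> V" if u: "u \<in> ?X" for u
    proof (rule ccontr)
      assume "u \<notin> V"
      then have "w u < w v" using V(3) v u by blast
      then show False using u below by simp
    qed
    then have "insert v ?X \<subseteq> V" using v by blast
    then have "card (insert v ?X) \<le> card V" using V(1) fin
      by (intro card_mono) (auto intro: finite_subset)
    moreover have "card (insert v ?X) = Suc (card ?X)" using below fin by simp
    ultimately show False using enough_above_g1 V(2) by simp
  qed
  then show thesis using that[OF V] by blast
qed

lemma sum_seats_outside_h1:
  "(\<Sum>h\<in>H - {h1}. if h = h2 then \<kappa> h - 2 else \<kappa> h) = card world - (\<kappa> h1 - 2)"
proof -
  have h2: "h2 \<in> H - {h1}" using h1_ne_h2 h2_in_H by blast
  have "(\<Sum>h\<in>H - {h1} - {h2}. if h = h2 then \<kappa> h - 2 else \<kappa> h) = (\<Sum>h\<in>H - {h1} - {h2}. \<kappa> h)"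
    by (rule sum.cong) auto
  then have "(\<Sum>h\<in>H - {h1}. if h = h2 then \<kappa> h - 2 else \<kappa> h) =
      \<kappa> h2 - 2 + (\<Sum>h\<in>H - {h1} - {h2}. \<kappa> h)"
    using sum.remove[OF _ h2, of "\<lambda>h. if h = h2 then \<kappa> h - 2 else \<kappa> h"] finite_H by simp
  moreover have "(\<Sum>h\<in>H - {h1}. \<kappa> h) = \<kappa> h2 + (\<Sum>h\<in>H - {h1} - {h2}. \<kappa> h)"
    using sum.remove[OF _ h2, of \<kappa>] finite_H by simp
  moreover have "(\<Sum>h\<in>H. \<kappa> h) = \<kappa> h1 + (\<Sum>h\<in>H - {h1}. \<kappa> h)"
    using sum.remove[OF finite_H h1_in_H] by simp
  ultimately show ?thesis
    using sum_kappa card_world kappa_pair_le[OF h1_in_H h2_in_H h1_ne_h2]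
      kappa_ge_2[OF h1_in_H] kappa_ge_2[OF h2_in_H] by simp
qed

lemma ex_destination:
  obtains t where "\<forall>d\<in>world. t d \<in> H"
    "\<forall>h\<in>H. card {d \<in> world. t d = h} = (if h = h1 \<or> h = h2 then \<kappa> h - 2 else \<kappa> h)"
    "\<forall>v\<in>world. t v = h1 \<longrightarrow> w g1 < w v"
    "\<forall>v\<in>world. \<forall>u\<in>world. t v = h1 \<longrightarrow> t u \<noteq> h1 \<longrightarrow> w u < w v"
proof -
  obtain V where V: "V \<subseteq> world" "card V = \<kappa> h1 - 2" "\<forall>v\<in>V. \<forall>u\<in>world - V. w u < w v"
    "\<forall>v\<in>V. w g1 < w v"
    using ex_top_world_above_g1 by blast
  define s where "s h = (if h = h2 then \<kappa> h - 2 else \<kappa> h)" for h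
  have "card (world - V) = card world - card V"
    using V(1) finite_D by (intro card_Diff_subset) (auto intro: finite_subset)
  then have "(\<Sum>h\<in>H - {h1}. s h) = card (world - V)"
    using sum_seats_outside_h1 V(2) unfolding s_def by simp
  then obtain t' where t': "\<forall>y\<in>world - V. t' y \<in> H - {h1}"
    "\<forall>h\<in>H - {h1}. card {y \<in> world - V. t' y = h} = s h"
    using ex_map_with_fibre_cards[of "H - {h1}" "world - V" s] finite_H finite_D by auto
  define t where "t d = (if d \<in> V then h1 else t' d)" for d
  have fibre_h1: "{d \<in> world. t d = h1} = V" using V(1) t'(1) unfolding t_def by auto
  have fibre: "{d \<in> world. t d = h} = {y \<in> world - V. t' y = h}" if "h \<noteq> h1" for h
    using that unfolding t_def by auto
  show thesis
  proof (rule that)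
    show "\<forall>d\<in>world. t d \<in> H" using t'(1) h1_in_H unfolding t_def by auto
    show "\<forall>h\<in>H. card {d \<in> world. t d = h} = (if h = h1 \<or> h = h2 then \<kappa> h - 2 else \<kappa> h)"
      using fibre fibre_h1 V(2) t'(2) h1_ne_h2 unfolding s_def by auto
    show "\<forall>v\<in>world. t v = h1 \<longrightarrow> w g1 < w v" using fibre_h1 V(4) by blast
    show "\<forall>v\<in>world. \<forall>u\<in>world. t v = h1 \<longrightarrow> t u \<noteq> h1 \<longrightarrow> w u < w v"
      using fibre_h1 V(3) by blast
  qed
qed

theorem ex_profile_without_stable_matching:
  "\<exists>(Pd :: 'd \<Rightarrow> 'h option rel) (Pc :: 'd \<times> 'd \<Rightarrow> ('h option \<times> 'h option) rel)
      (Ph :: 'h \<Rightarrow> 'd set rel).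
     (\<forall>d\<in>D. doctor_pref H (Pd d)) \<and>
     (\<forall>h\<in>H. hosp_pref_CPI D (\<kappa> h) P0 (Ph h)) \<and>
     (\<forall>(f, m)\<in>C. couple_pref H (Pc (f, m)) \<and> RVT H (Pd f) (Pd m) (Pc (f, m))) \<and>
     \<not> (\<exists>\<mu>. stable H \<kappa> S C Pd Pc Ph \<mu>)"
proof -
  obtain t where t: "\<forall>d\<in>world. t d \<in> H"
    "\<forall>h\<in>H. card {d \<in> world. t d = h} = (if h = h1 \<or> h = h2 then \<kappa> h - 2 else \<kappa> h)"
    "\<forall>v\<in>world. t v = h1 \<longrightarrow> w g1 < w v"
    "\<forall>v\<in>world. \<forall>u\<in>world. t v = h1 \<longrightarrow> t u \<noteq> h1 \<longrightarrow> w u < w v"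
    using ex_destination by blast
  obtain idx where "bij_betw idx H {0..<card H}" using ex_bij_betw_finite_nat[OF finite_H] by blast
  then have "inj_on idx H" "\<forall>h\<in>H. idx h < card H" unfolding bij_betw_def by auto
  then interpret gadget_profile H \<kappa> S C P0 f m g1 g2 z h1 h2 t idx
    using t by unfold_locales
  show ?thesis
    using doctor_pref_Pdoc hosp_pref_CPI_Phosp couple_pref_Pcouple RVT_Pcouple no_stable_matching
    by blast
qed

end

context CPI_market
begin

lemma ex_other_hospital: "h \<in> H \<Longrightarrow> \<exists>h'\<in>H. h' \<noteq> h"
  using ex_other_of_card_ge_2[OF card_H] .

text \<open>The two cases violate clauses (ii) and (i) of SCPI, restated in terms of ranks.\<close>

lemma SCPI_violation:
  assumes "\<not> SCPI H \<kappa> S C P0"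
  obtains (lowest) f m where "(f, m) \<in> C" "w m = 0" "2 \<le> card {d \<in> D. w m < w d \<and> w d < w f}"
  | (crowded) f m h where "(f, m) \<in> C" "0 < w m" "\<exists>d\<in>D. w m < w d \<and> w d < w f"
      "h \<in> H" "\<kappa> h \<le> card {d \<in> D. w m < w d}"
proof -
  obtain f m where c: "(f, m) \<in> C" and viol: "\<not> (
      (\<not> (\<forall>d\<in>D. d \<noteq> m \<longrightarrow> (Some d, Some m) \<in> P0) \<longrightarrow>
         (card {d\<in>D. (Some f, Some d) \<in> P0 \<and> (Some d, Some m) \<in> P0} = 0 \<or>
          (\<forall>h\<in>H. card {d\<in>D. (Some d, Some m) \<in> P0} < \<kappa> h))) \<and>
      ((\<forall>d\<in>D. d \<noteq> m \<longrightarrow> (Some d, Some m) \<in> P0) \<longrightarrow>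
         card {d\<in>D. (Some f, Some d) \<in> P0 \<and> (Some d, Some m) \<in> P0} \<le> 1))"
    using assms unfolding SCPI_def Let_def by blast
  have fD: "f \<in> D" and mD: "m \<in> D" using couple_in_D[OF c] by auto
  obtain d0 where d0: "d0 \<in> D" "w d0 = 0" using ex_rank card_D by fastforce
  have "(\<forall>d\<in>D. d \<noteq> m \<longrightarrow> (Some d, Some m) \<in> P0) \<longleftrightarrow> w m = 0"
    using pref_iff_rank_less[OF _ mD] rank_eq_iff[OF _ mD] d0 by (metis neq0_conv not_less0)
  moreover have
    "{d \<in> D. (Some f, Some d) \<in> P0 \<and> (Some d, Some m) \<in> P0} = {d \<in> D. w m < w d \<and> w d < w f}"
    "{d \<in> D. (Some d, Some m) \<in> P0} = {d \<in> D. w m < w d}"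
    using pref_iff_rank_less fD mD by auto
  ultimately have "w m = 0 \<and> 2 \<le> card {d \<in> D. w m < w d \<and> w d < w f} \<or>
      0 < w m \<and> {d \<in> D. w m < w d \<and> w d < w f} \<noteq> {} \<and> (\<exists>h\<in>H. \<kappa> h \<le> card {d \<in> D. w m < w d})"
    using viol finite_D by (auto simp: not_less)
  then show thesis using lowest[OF c] crowded[OF c] by blast
qed

lemma gadget_of_lowest_couple:
  assumes c: "(f, m) \<in> C" and m0: "w m = 0" and btw: "2 \<le> card {d \<in> D. w m < w d \<and> w d < w f}"
  shows "\<exists>g1 g2 h1 h2. gadget H \<kappa> S C P0 f m g1 g2 m h1 h2"
proof -
  have fD: "f \<in> D" and mD: "m \<in> D" using couple_in_D[OF c] by auto
  have "card {d \<in> D. w m < w d \<and> w d < w f} \<le> card {1..<w f}"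
    using m0 by (intro card_inj_on_le[of w]) (auto intro: inj_on_subset[OF inj_on_rank])
  then have f3: "3 \<le> w f" using btw by simp
  then have "2 < card D" "1 < card D" using rank_less_card[OF fD] by linarith+
  then obtain g1 g2 where g: "g1 \<in> D" "w g1 = 2" "g2 \<in> D" "w g2 = 1" using ex_rank by meson
  have "H \<noteq> {}" using card_H by auto
  then obtain h1 h2 where h: "h1 \<in> H" "h2 \<in> H" "h1 \<noteq> h2" using ex_other_hospital by blast
  have "f \<noteq> g1" "f \<noteq> m" "f \<noteq> g2" "g1 \<noteq> m" "g1 \<noteq> g2" "g2 \<noteq> m"
    using g m0 f3 by (auto dest: arg_cong[of _ _ w])
  then have dist: "g2 \<noteq> m" "card {f, g1, m, g2} = 4" by simp_all
  have "w g1 < w v" if v: "v \<in> D - {f, g1, m, g2}" for v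
  proof -
    have "w v \<noteq> w m" "w v \<noteq> w g2" "w v \<noteq> w g1"
      using v rank_eq_iff[of v m] rank_eq_iff[of v g2] rank_eq_iff[of v g1] mD g by auto
    then show ?thesis using m0 g by simp
  qed
  then have "{v \<in> D - {f, g1, m, g2}. w g1 < w v} = D - {f, g1, m, g2}" by blast
  moreover have "card (D - {f, g1, m, g2}) = card D - 4"
    using dist(2) fD mD g by (subst card_Diff_subset) auto
  ultimately have enough: "\<kappa> h1 - 2 \<le> card {v \<in> D - {f, g1, m, g2}. w g1 < w v}"
    using kappa_pair_le[OF h] kappa_ge_2[OF h(2)] by simp
  have "gadget H \<kappa> S C P0 f m g1 g2 m h1 h2"
  proof (intro gadget.intro[OF CPI_market_axioms] gadget_axioms.intro)
    show "\<forall>a. (a, m) \<in> C \<longrightarrow> a \<in> {f, g1, m, g2}" using couple_snd_unique[OF c] by blast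
  qed (use c g h dist(1) mD m0 f3 enough in auto)
  then show ?thesis by blast
qed

lemma enough_above_successor:
  assumes mD: "m \<in> D" and g1: "g1 \<in> D" "w g1 = w m + 1" and g2: "w g2 < w g1"
    and crowded: "\<kappa> h \<le> card {d \<in> D. w m < w d}"
  shows "\<kappa> h - 2 \<le> card {v \<in> D - {f, g1, m, g2}. w g1 < w v}"
proof -
  let ?X = "{d \<in> D. w g1 < w d}"
  have finX: "finite ?X" using finite_D by simp
  have "{d \<in> D. w m < w d} = insert g1 ?X"
  proof (intro equalityI subsetI)
    fix d assume d: "d \<in> {d \<in> D. w m < w d}"
    show "d \<in> insert g1 ?X"
    proof (cases "w d = w g1")
      case True
      then show ?thesis using d rank_eq_iff[OF _ g1(1)] by blast
    next
      case False
      then show ?thesis using d g1(2) by auto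
    qed
  qed (use g1 in auto)
  then have "card {d \<in> D. w m < w d} = card ?X + 1" using finX by simp
  moreover have "?X - {f} \<subseteq> {v \<in> D - {f, g1, m, g2}. w g1 < w v}" using g1 g2 by auto
  then have "card (?X - {f}) \<le> card {v \<in> D - {f, g1, m, g2}. w g1 < w v}"
    using finite_D by (intro card_mono) auto
  moreover have "card (?X - {f}) = (if f \<in> ?X then card ?X - 1 else card ?X)"
    by (rule card_Diff_singleton_if)
  ultimately show ?thesis using crowded by (simp split: if_splits)
qed

lemma ex_second_gadget_doctor:
  assumes c: "(f, m) \<in> C" and m: "0 < w m" and g1: "g1 \<in> D" "w g1 = w m + 1"
    and z: "z \<in> D" "w z = 0"
    and no_lowest: "\<forall>(a, b)\<in>C. w b = 0 \<longrightarrow> card {d \<in> D. w b < w d \<and> w d < w a} \<le> 1"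
  obtains g2 where "g2 \<in> D" "g2 \<noteq> m" "w g2 < w g1" "\<forall>a. (a, z) \<in> C \<longrightarrow> a \<in> {f, g1, m, g2}"
    "w m < w g2 \<or> g2 = z \<or> (g2, z) \<in> C"
proof (cases "\<exists>q. (q, z) \<in> C \<and> q \<noteq> g1")
  case True
  then obtain q where q: "(q, z) \<in> C" "q \<noteq> g1" by blast
  have qD: "q \<in> D" using couple_in_D[OF q(1)] by blast
  have "w q \<le> 2"
  proof (rule ccontr)
    assume "\<not> w q \<le> 2"
    then have "2 < card D" "1 < card D" using rank_less_card[OF qD] by linarith+
    then obtain d1 d2 where "d1 \<in> D" "w d1 = 1" "d2 \<in> D" "w d2 = 2" using ex_rank by meson
    then have "{d1, d2} \<subseteq> {d \<in> D. w z < w d \<and> w d < w q}" "d1 \<noteq> d2"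
      using z(2) \<open>\<not> w q \<le> 2\<close> by auto
    then have "2 \<le> card {d \<in> D. w z < w d \<and> w d < w q}"
      using card_mono[OF _ \<open>{d1, d2} \<subseteq> _\<close>] finite_D by fastforce
    then show False using no_lowest q(1) z(2) by fastforce
  qed
  then have "w q < w g1" using q(2) rank_eq_iff[OF qD g1(1)] g1(2) m by auto
  moreover have "q \<noteq> m" using couple_fst_not_snd[of m z f] q(1) c by blast
  moreover have "\<forall>a. (a, z) \<in> C \<longrightarrow> a \<in> {f, g1, m, q}" using couple_snd_unique[OF q(1)] by blast
  ultimately show thesis using that[of q] qD q(1) by blast
next
  case False
  have "z \<noteq> m" using m z(2) by (intro notI) simp
  then show thesis using that[of z] z g1(2) False by auto
qed

lemma gadget_of_crowded_couple:
  assumes c: "(f, m) \<in> C" and m: "0 < w m" and between: "\<exists>d\<in>D. w m < w d \<and> w d < w f"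
    and h: "h \<in> H" and crowded: "\<kappa> h \<le> card {d \<in> D. w m < w d}"
    and no_lowest: "\<forall>(a, b)\<in>C. w b = 0 \<longrightarrow> card {d \<in> D. w b < w d \<and> w d < w a} \<le> 1"
  shows "\<exists>g1 g2 z h1 h2. gadget H \<kappa> S C P0 f m g1 g2 z h1 h2"
proof -
  have mD: "m \<in> D" using couple_in_D[OF c] by blast
  obtain d0 where d0: "d0 \<in> D" "w m < w d0" "w d0 < w f" using between by blast
  then have "w m + 1 < card D" using rank_less_card[OF d0(1)] by linarith
  then obtain g1 where g1: "g1 \<in> D" "w g1 = w m + 1" using ex_rank by blast
  obtain z where z: "z \<in> D" "w z = 0" using ex_rank card_D by fastforce
  obtain g2 where g2: "g2 \<in> D" "g2 \<noteq> m" "w g2 < w g1" "\<forall>a. (a, z) \<in> C \<longrightarrow> a \<in> {f, g1, m, g2}"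
    "w m < w g2 \<or> g2 = z \<or> (g2, z) \<in> C"
    using ex_second_gadget_doctor[OF c m g1 z no_lowest] by blast
  obtain h2 where h2: "h2 \<in> H" "h2 \<noteq> h" using ex_other_hospital[OF h] by blast
  have "gadget H \<kappa> S C P0 f m g1 g2 z h h2"
  proof (intro gadget.intro[OF CPI_market_axioms] gadget_axioms.intro)
    show "\<kappa> h - 2 \<le> card {v \<in> D - {f, g1, m, g2}. w g1 < w v}"
      by (rule enough_above_successor[OF mD g1 g2(3) crowded])
  qed (use c g1 g2 z h h2 d0 in auto)
  then show ?thesis by blast
qed

lemma ex_gadget_of_not_SCPI:
  assumes "\<not> SCPI H \<kappa> S C P0"
  shows "\<exists>f m g1 g2 z h1 h2. gadget H \<kappa> S C P0 f m g1 g2 z h1 h2"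
proof (cases "\<exists>(f, m)\<in>C. w m = 0 \<and> 2 \<le> card {d \<in> D. w m < w d \<and> w d < w f}")
  case True
  then show ?thesis using gadget_of_lowest_couple by blast
next
  case False
  then have no_lowest: "\<forall>(a, b)\<in>C. w b = 0 \<longrightarrow> card {d \<in> D. w b < w d \<and> w d < w a} \<le> 1" by auto
  from assms show ?thesis
  proof (cases rule: SCPI_violation)
    case (lowest f m)
    then show ?thesis using False by blast
  next
    case (crowded f m h)
    then show ?thesis using gadget_of_crowded_couple[OF _ _ _ _ _ no_lowest] by blast
  qed
qed

end

theorem theorem3:
  fixes H :: "'h set" and \<kappa> :: "'h \<Rightarrow> nat" and S :: "'d set" and C :: "('d \<times> 'd) set"
    and P0 :: "'d option rel"
  assumes model: "standing_model H \<kappa> S C"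
    and P0: "indiv_hosp_pref (doctors S C) P0"
    and labels: "\<forall>(f, m)\<in>C. (Some f, Some m) \<in> P0"
    and notSCPI: "\<not> SCPI H \<kappa> S C P0"
  shows "\<exists>(Pd :: 'd \<Rightarrow> 'h option rel) (Pc :: 'd \<times> 'd \<Rightarrow> ('h option \<times> 'h option) rel)
            (Ph :: 'h \<Rightarrow> 'd set rel).
           (\<forall>d\<in>doctors S C. doctor_pref H (Pd d)) \<and>
           (\<forall>h\<in>H. hosp_pref_CPI (doctors S C) (\<kappa> h) P0 (Ph h)) \<and>
           (\<forall>(f, m)\<in>C. couple_pref H (Pc (f, m)) \<and> RVT H (Pd f) (Pd m) (Pc (f, m))) \<and>
           \<not> (\<exists>\<mu>. stable H \<kappa> S C Pd Pc Ph \<mu>)"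
proof -
  interpret CPI_market H \<kappa> S C P0 using model P0 labels by unfold_locales
  obtain f m g1 g2 z h1 h2 where "gadget H \<kappa> S C P0 f m g1 g2 z h1 h2"
    using ex_gadget_of_not_SCPI[OF notSCPI] by blast
  then show ?thesis by (rule gadget.ex_profile_without_stable_matching)
qed

end
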